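(* Let $\eta>0$ and let $s<-\frac{1}{2}$ be given. Then there does not exist a time $T>0$ such that the Cauchy problem $$u_t+uu_x+\eta(\mathcal{H}u_x-u_{xx})=0,\qquad u(x,0)=\phi(x),\quad x\in\mathbb{R},$$ admits a unique local solution on the time interval $[0,T]$ and such that the flow map data-solution $\phi\mapsto u(t)$ is $C^2$ at the origin from $H^s(\mathbb{R})$ to $C([0,T];H^s(\mathbb{R}))$.
   Context: $\mathcal{H}$ denotes the Hilbert transform, $\mathcal{H}f=(i\,\mathrm{sgn}(\xi)\widehat{f}(\xi))^{\vee}$. Solutions are understood via the integral formulation $u(t)=S_0(t)\phi-\int_0^t S_0(t-t')[u(t')u_x(t')]\,dt'$, where $S_0(t)f=\big(e^{-\eta(\xi^2-|\xi|)t}\widehat f\big)^{\vee}$ for $t\ge 0$. *)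

theory Defs
  imports "HOL-Analysis.Analysis"
begin

text \<open>Functions on the real line are represented on the Fourier side:
  a (class of a) function v with Fourier transform v hat is stored as the function
  v hat :: real => complex.  Convention: f hat (xi) = integral of exp(-i x xi) f(x) dx,
  so that (f g) hat = (1/(2 pi)) (f hat * g hat) and (f_x) hat = i xi f hat.\<close>

definition hs_norm :: "real \<Rightarrow> (real \<Rightarrow> complex) \<Rightarrow> real" where
  "hs_norm s v = sqrt (LINT \<xi>|lborel. (1 + \<xi>\<^sup>2) powr s * (cmod (v \<xi>))\<^sup>2)"

text \<open>Real-valued Sobolev space H^s(R), Fourier side (elements are representatives;
  the seminorm hs_norm identifies functions equal almost everywhere).\<close>
definition Hs :: "real \<Rightarrow> (real \<Rightarrow> complex) set" where
  "Hs s = {v. v \<in> borel_measurable lborel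
              \<and> integrable lborel (\<lambda>\<xi>. (1 + \<xi>\<^sup>2) powr s * (cmod (v \<xi>))\<^sup>2)
              \<and> (AE \<xi> in lborel. v (- \<xi>) = cnj (v \<xi>))}"

definition CHs :: "real \<Rightarrow> real \<Rightarrow> (real \<Rightarrow> real \<Rightarrow> complex) set" where
  "CHs T s = {w. (\<forall>t\<in>{0..T}. w t \<in> Hs s)
               \<and> (\<forall>t\<in>{0..T}. ((\<lambda>\<tau>. hs_norm s (\<lambda>\<xi>. w \<tau> \<xi> - w t \<xi>)) \<longlongrightarrow> 0) (at t within {0..T}))}"

definition chs_norm :: "real \<Rightarrow> real \<Rightarrow> (real \<Rightarrow> real \<Rightarrow> complex) \<Rightarrow> real" where
  "chs_norm T s w = (SUP t\<in>{0..T}. hs_norm s (w t))"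

text \<open>Bounded real-linear operators H^s -> C([0,T];H^s) (linearity modulo null elements).\<close>
definition bdd_lin_op :: "real \<Rightarrow> real \<Rightarrow> ((real \<Rightarrow> complex) \<Rightarrow> real \<Rightarrow> real \<Rightarrow> complex) \<Rightarrow> bool" where
  "bdd_lin_op s T L \<longleftrightarrow>
     (\<forall>h\<in>Hs s. L h \<in> CHs T s)
   \<and> (\<forall>h\<in>Hs s. \<forall>g\<in>Hs s. \<forall>a b :: real.
        chs_norm T s (\<lambda>t \<xi>. L (\<lambda>\<zeta>. a *\<^sub>R h \<zeta> + b *\<^sub>R g \<zeta>) t \<xi> - (a *\<^sub>R L h t \<xi> + b *\<^sub>R L g t \<xi>)) = 0)
   \<and> (\<exists>C. \<forall>h\<in>Hs s. chs_norm T s (L h) \<le> C * hs_norm s h)"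

definition frechet_deriv_at ::
  "real \<Rightarrow> real \<Rightarrow> ((real \<Rightarrow> complex) \<Rightarrow> real \<Rightarrow> real \<Rightarrow> complex) \<Rightarrow> (real \<Rightarrow> complex)
     \<Rightarrow> ((real \<Rightarrow> complex) \<Rightarrow> real \<Rightarrow> real \<Rightarrow> complex) \<Rightarrow> bool" where
  "frechet_deriv_at s T F \<phi> L \<longleftrightarrow>
     bdd_lin_op s T L
   \<and> (\<forall>\<epsilon>>0. \<exists>\<delta>>0. \<forall>h\<in>Hs s. hs_norm s h < \<delta> \<longrightarrow>
        chs_norm T s (\<lambda>t \<xi>. F (\<lambda>\<zeta>. \<phi> \<zeta> + h \<zeta>) t \<xi> - F \<phi> t \<xi> - L h t \<xi>) \<le> \<epsilon> * hs_norm s h)"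

text \<open>F is twice Frechet differentiable at the origin: F is Frechet differentiable on a ball
  around 0 with derivative DF, and DF (as a map into bounded operators, operator norm)
  is Frechet differentiable at 0 with derivative the bounded bilinear map D2.\<close>
definition twice_frechet_at_zero ::
  "real \<Rightarrow> real \<Rightarrow> ((real \<Rightarrow> complex) \<Rightarrow> real \<Rightarrow> real \<Rightarrow> complex) \<Rightarrow> bool" where
  "twice_frechet_at_zero s T F \<longleftrightarrow>
    (\<exists>r>0. \<exists>DF D2.
        (\<forall>\<phi>\<in>Hs s. hs_norm s \<phi> < r \<longrightarrow> frechet_deriv_at s T F \<phi> (DF \<phi>))
      \<and> (\<forall>h\<in>Hs s. bdd_lin_op s T (D2 h))
      \<and> (\<forall>h\<in>Hs s. \<forall>h'\<in>Hs s. \<forall>g\<in>Hs s. \<forall>a b :: real.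
           chs_norm T s (\<lambda>t \<xi>. D2 (\<lambda>\<zeta>. a *\<^sub>R h \<zeta> + b *\<^sub>R h' \<zeta>) g t \<xi>
                                 - (a *\<^sub>R D2 h g t \<xi> + b *\<^sub>R D2 h' g t \<xi>)) = 0)
      \<and> (\<exists>C. \<forall>h\<in>Hs s. \<forall>g\<in>Hs s. chs_norm T s (D2 h g) \<le> C * hs_norm s h * hs_norm s g)
      \<and> (\<forall>\<epsilon>>0. \<exists>\<delta>>0. \<forall>h\<in>Hs s. hs_norm s h < \<delta> \<longrightarrow>
           (\<forall>g\<in>Hs s. chs_norm T s (\<lambda>t \<xi>. DF h g t \<xi> - DF (\<lambda>_. 0) g t \<xi> - D2 h g t \<xi>)
                        \<le> \<epsilon> * hs_norm s h * hs_norm s g)))"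

text \<open>Fourier transform of the nonlinearity u u_x = (1/2)(u^2)_x at time tau:
  (i xi / (4 pi)) * (w tau hat convolved with itself)(xi).\<close>
definition nonlin :: "(real \<Rightarrow> real \<Rightarrow> complex) \<Rightarrow> real \<Rightarrow> real \<Rightarrow> complex" where
  "nonlin w \<tau> \<xi> = (\<i> * complex_of_real \<xi> / complex_of_real (4 * pi))
                     * (LINT \<zeta>|lborel. w \<tau> (\<xi> - \<zeta>) * w \<tau> \<zeta>)"

definition S0sym :: "real \<Rightarrow> real \<Rightarrow> real \<Rightarrow> complex" where
  "S0sym \<eta> t \<xi> = complex_of_real (exp (- \<eta> * (\<xi>\<^sup>2 - \<bar>\<xi>\<bar>) * t))"

definition mild_solution ::
  "real \<Rightarrow> real \<Rightarrow> (real \<Rightarrow> complex) \<Rightarrow> (real \<Rightarrow> real \<Rightarrow> complex) \<Rightarrow> bool" where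
  "mild_solution \<eta> T \<phi> w \<longleftrightarrow>
    (\<forall>t\<in>{0..T}. AE \<xi> in lborel.
        (\<forall>\<tau>\<in>{0..t}. integrable lborel (\<lambda>\<zeta>. w \<tau> (\<xi> - \<zeta>) * w \<tau> \<zeta>))
      \<and> set_integrable lborel {0..t} (\<lambda>\<tau>. S0sym \<eta> (t - \<tau>) \<xi> * nonlin w \<tau> \<xi>)
      \<and> w t \<xi> = S0sym \<eta> t \<xi> * \<phi> \<xi> - (LINT \<tau>:{0..t}|lborel. S0sym \<eta> (t - \<tau>) \<xi> * nonlin w \<tau> \<xi>))"

definition smooth_solution ::
  "real \<Rightarrow> real \<Rightarrow> (real \<Rightarrow> complex) \<Rightarrow> (real \<Rightarrow> real \<Rightarrow> complex) \<Rightarrow> bool" where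
  "smooth_solution \<eta> T \<phi> w \<longleftrightarrow> (\<forall>\<sigma>. w \<in> CHs T \<sigma>) \<and> mild_solution \<eta> T \<phi> w"

definition flow_map :: "real \<Rightarrow> real \<Rightarrow> real \<Rightarrow> ((real \<Rightarrow> complex) \<Rightarrow> real \<Rightarrow> real \<Rightarrow> complex) \<Rightarrow> bool" where
  "flow_map \<eta> s T F \<longleftrightarrow>
    (\<exists>r>0. (\<forall>\<phi>\<in>Hs s. hs_norm s \<phi> < r \<longrightarrow> F \<phi> \<in> CHs T s)
         \<and> (\<forall>\<phi>. (\<forall>\<sigma>. \<phi> \<in> Hs \<sigma>) \<and> hs_norm s \<phi> < r \<longrightarrow>
               smooth_solution \<eta> T \<phi> (F \<phi>)
             \<and> (\<forall>w. smooth_solution \<eta> T \<phi> w \<longrightarrow>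
                    (\<forall>t\<in>{0..T}. hs_norm s (\<lambda>\<xi>. w t \<xi> - F \<phi> t \<xi>) = 0))))"

end

theory Submission
  imports Defs "HOL-Probability.Sinc_Integral"
begin

text \<open>If the flow \<open>F\<close> were \<open>C\<^sup>2\<close> at the origin, its second derivative in a direction \<open>h\<close> would
  be \<open>-2 A\<^sub>2(t)\<close>, where \<open>A\<^sub>2(t) = \<integral>\<^sub>0\<^sup>t S\<^sub>0(t - \<tau>) [v v\<^sub>x](\<tau>) d\<tau>\<close>, \<open>v = S\<^sub>0(\<cdot>) h\<close>, is the
  quadratic Picard iterate: pairing with a test function \<open>\<psi>\<close>, the Taylor expansion of
  \<open>\<epsilon> \<mapsto> \<langle>F(\<epsilon> h)(t), \<psi>\<rangle>\<close> given by the Fr\'echet derivatives must agree to second order with the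
  Picard expansion \<open>\<epsilon> S\<^sub>0(t) h - \<epsilon>\<^sup>2 A\<^sub>2(t) + O(\<epsilon>\<^sup>3)\<close> of the smooth solution with data \<open>\<epsilon> h\<close>
  (Duhamel estimates in \<open>L\<^sup>2\<close> and a continuity argument). Boundedness of \<open>D\<^sup>2F(0)\<close> thus gives
  \<open>\<parallel>A\<^sub>2(t)\<parallel>\<^sub>s \<lesssim> \<parallel>h\<parallel>\<^sub>s\<^sup>2\<close>. For \<open>h\<^sub>N\<close> the indicator of \<open>N \<le> \<bar>\<xi>\<bar> \<le> 2N\<close> and \<open>t = 1/N\<^sup>2\<close>, the interaction
  of the frequencies near \<open>N\<close> and \<open>-N\<close> makes \<open>\<bar>A\<^sub>2(t) \<xi>\<bar> \<gtrsim> 1\<close> for \<open>\<xi> \<in> [N/4, N/2]\<close>, so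
  \<open>\<parallel>A\<^sub>2\<parallel>\<^sub>s\<^sup>2 \<gtrsim> N\<^sup>1\<^sup>+\<^sup>2\<^sup>s\<close>, while \<open>\<parallel>h\<^sub>N\<parallel>\<^sub>s\<^sup>4 \<lesssim> N\<^sup>2\<^sup>+\<^sup>4\<^sup>s\<close>; the ratio \<open>N\<^sup>-\<^sup>1\<^sup>-\<^sup>2\<^sup>s\<close> is unbounded
  when \<open>s < -1/2\<close>.\<close>

section \<open>Weighted \<open>L\<^sup>2\<close> spaces on the Fourier side\<close>

definition hs_weight :: "real \<Rightarrow> real \<Rightarrow> real" where
  "hs_weight s \<xi> = (1 + \<xi>\<^sup>2) powr s"

definition hs_finite :: "real \<Rightarrow> (real \<Rightarrow> complex) \<Rightarrow> bool" where
  "hs_finite s v \<longleftrightarrow> v \<in> borel_measurable lborel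
                     \<and> integrable lborel (\<lambda>\<xi>. hs_weight s \<xi> * (cmod (v \<xi>))\<^sup>2)"

definition hs_inner :: "real \<Rightarrow> (real \<Rightarrow> complex) \<Rightarrow> (real \<Rightarrow> complex) \<Rightarrow> real" where
  "hs_inner s v w = (LINT \<xi>|lborel. hs_weight s \<xi> * Re (v \<xi> * cnj (w \<xi>)))"

lemma hs_weight_pos [simp]: "hs_weight s \<xi> > 0"
proof -
  have "1 + \<xi>\<^sup>2 \<noteq> 0" using zero_le_power2[of \<xi>] by linarith
  then show ?thesis unfolding hs_weight_def by simp
qed

lemma hs_weight_nonneg [simp]: "hs_weight s \<xi> \<ge> 0"
  using hs_weight_pos[of s \<xi>] by linarith

lemma hs_weight_0 [simp]: "hs_weight 0 \<xi> = 1"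
proof -
  have "1 + \<xi>\<^sup>2 \<noteq> 0" using zero_le_power2[of \<xi>] by linarith
  then show ?thesis unfolding hs_weight_def by simp
qed

lemma hs_weight_le_1: "s \<le> 0 \<Longrightarrow> hs_weight s \<xi> \<le> 1"
  using powr_mono[of s 0 "1 + \<xi>\<^sup>2"] hs_weight_0[of \<xi>] unfolding hs_weight_def by simp

lemma hs_weight_measurable [measurable]: "hs_weight s \<in> borel_measurable lborel"
  unfolding hs_weight_def by measurable

lemma hs_norm_eq: "hs_norm s v = sqrt (LINT \<xi>|lborel. hs_weight s \<xi> * (cmod (v \<xi>))\<^sup>2)"
  unfolding hs_norm_def hs_weight_def ..

lemma hs_norm_nonneg [simp]: "hs_norm s v \<ge> 0"
  unfolding hs_norm_eq by (auto intro!: integral_nonneg_AE)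

lemma hs_norm_squared: "(hs_norm s v)\<^sup>2 = (LINT \<xi>|lborel. hs_weight s \<xi> * (cmod (v \<xi>))\<^sup>2)"
  unfolding hs_norm_eq by (auto intro!: integral_nonneg_AE)

lemma Hs_imp_hs_finite: "v \<in> Hs s \<Longrightarrow> hs_finite s v"
  unfolding Hs_def hs_finite_def hs_weight_def by auto

lemma Hs_zero: "(\<lambda>\<zeta>. 0) \<in> Hs s"
  unfolding Hs_def by simp

lemma hs_finite_measurable: "hs_finite s v \<Longrightarrow> v \<in> borel_measurable lborel"
  unfolding hs_finite_def by simp

lemma hs_finite_dominated:
  assumes v [measurable]: "v \<in> borel_measurable lborel" and w: "hs_finite s w" and c: "c \<ge> 0"
    and le: "AE \<xi> in lborel. cmod (v \<xi>) \<le> c * cmod (w \<xi>)"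
  shows "hs_finite s v" "hs_norm s v \<le> c * hs_norm s w"
proof -
  have [measurable]: "w \<in> borel_measurable lborel"
    and wi: "integrable lborel (\<lambda>\<xi>. hs_weight s \<xi> * (cmod (w \<xi>))\<^sup>2)"
    using w unfolding hs_finite_def by auto
  have le2: "AE \<xi> in lborel. hs_weight s \<xi> * (cmod (v \<xi>))\<^sup>2 \<le> c\<^sup>2 * (hs_weight s \<xi> * (cmod (w \<xi>))\<^sup>2)"
    using le
  proof eventually_elim
    case (elim \<xi>)
    have "(cmod (v \<xi>))\<^sup>2 \<le> (c * cmod (w \<xi>))\<^sup>2" using elim by (intro power_mono) auto
    then show ?case by (auto simp: power_mult_distrib mult_left_mono algebra_simps)
  qed
  have vi: "integrable lborel (\<lambda>\<xi>. hs_weight s \<xi> * (cmod (v \<xi>))\<^sup>2)"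
    by (rule Bochner_Integration.integrable_bound[OF integrable_mult_right[OF wi, of "c\<^sup>2"]])
       (use le2 in auto)
  then show "hs_finite s v" unfolding hs_finite_def by simp
  have "(hs_norm s v)\<^sup>2 \<le> (LINT \<xi>|lborel. c\<^sup>2 * (hs_weight s \<xi> * (cmod (w \<xi>))\<^sup>2))"
    unfolding hs_norm_squared by (intro integral_mono_AE vi le2) (use wi in auto)
  also have "\<dots> = (c * hs_norm s w)\<^sup>2" by (simp add: hs_norm_squared power_mult_distrib)
  finally show "hs_norm s v \<le> c * hs_norm s w"
    using c by (meson hs_norm_nonneg mult_nonneg_nonneg power2_le_imp_le)
qed

lemma hs_finite_add:
  assumes "hs_finite s v" "hs_finite s w"
  shows "hs_finite s (\<lambda>\<xi>. v \<xi> + w \<xi>)"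
proof -
  have [measurable]: "v \<in> borel_measurable lborel" "w \<in> borel_measurable lborel"
    using assms unfolding hs_finite_def by auto
  have i: "integrable lborel (\<lambda>\<xi>. 2 * (hs_weight s \<xi> * (cmod (v \<xi>))\<^sup>2) + 2 * (hs_weight s \<xi> * (cmod (w \<xi>))\<^sup>2))"
    using assms unfolding hs_finite_def by auto
  have "(cmod (v \<xi> + w \<xi>))\<^sup>2 \<le> 2 * (cmod (v \<xi>))\<^sup>2 + 2 * (cmod (w \<xi>))\<^sup>2" for \<xi>
  proof -
    have "(cmod (v \<xi> + w \<xi>))\<^sup>2 \<le> (cmod (v \<xi>) + cmod (w \<xi>))\<^sup>2"
      by (intro power_mono norm_triangle_ineq) auto
    also have "\<dots> \<le> 2 * (cmod (v \<xi>))\<^sup>2 + 2 * (cmod (w \<xi>))\<^sup>2"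
      using zero_le_power2[of "cmod (v \<xi>) - cmod (w \<xi>)"] by (simp add: power2_eq_square algebra_simps)
    finally show ?thesis .
  qed
  then have "hs_weight s \<xi> * (cmod (v \<xi> + w \<xi>))\<^sup>2
      \<le> hs_weight s \<xi> * (2 * (cmod (v \<xi>))\<^sup>2 + 2 * (cmod (w \<xi>))\<^sup>2)" for \<xi>
    by (intro mult_left_mono) auto
  then have "hs_weight s \<xi> * (cmod (v \<xi> + w \<xi>))\<^sup>2
      \<le> 2 * (hs_weight s \<xi> * (cmod (v \<xi>))\<^sup>2) + 2 * (hs_weight s \<xi> * (cmod (w \<xi>))\<^sup>2)" for \<xi>
    by (simp add: algebra_simps)
  then have "integrable lborel (\<lambda>\<xi>. hs_weight s \<xi> * (cmod (v \<xi> + w \<xi>))\<^sup>2)"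
    by (intro Bochner_Integration.integrable_bound[OF i]) auto
  then show ?thesis unfolding hs_finite_def by simp
qed

lemma hs_finite_cmult:
  assumes "hs_finite s v"
  shows "hs_finite s (\<lambda>\<xi>. c * v \<xi>)" "hs_norm s (\<lambda>\<xi>. c * v \<xi>) = cmod c * hs_norm s v"
proof -
  have [measurable]: "v \<in> borel_measurable lborel" using assms by (rule hs_finite_measurable)
  show "hs_finite s (\<lambda>\<xi>. c * v \<xi>)"
    using hs_finite_dominated[of "\<lambda>\<xi>. c * v \<xi>" s v "cmod c"] assms by (auto simp: norm_mult)
  have "(hs_norm s (\<lambda>\<xi>. c * v \<xi>))\<^sup>2 = (cmod c * hs_norm s v)\<^sup>2"
    unfolding hs_norm_squared power_mult_distrib
    by (simp add: norm_mult power_mult_distrib algebra_simps flip: integral_mult_right_zero)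
  then show "hs_norm s (\<lambda>\<xi>. c * v \<xi>) = cmod c * hs_norm s v"
    by (metis hs_norm_nonneg norm_ge_zero power2_eq_imp_eq zero_le_mult_iff)
qed

lemma hs_finite_scaleR:
  assumes "hs_finite s v"
  shows "hs_finite s (\<lambda>\<xi>. c *\<^sub>R v \<xi>)" "hs_norm s (\<lambda>\<xi>. c *\<^sub>R v \<xi>) = \<bar>c\<bar> * hs_norm s v"
  using hs_finite_cmult[OF assms, of "complex_of_real c"] by (simp_all add: scaleR_conv_of_real)

lemma Hs_scaleR: "h \<in> Hs s \<Longrightarrow> (\<lambda>\<zeta>. c *\<^sub>R h \<zeta>) \<in> Hs s"
  using hs_finite_scaleR(1)[OF Hs_imp_hs_finite, of h s c]
  unfolding Hs_def hs_finite_def hs_weight_def by auto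

lemma hs_finite_minus:
  assumes "hs_finite s v"
  shows "hs_finite s (\<lambda>\<xi>. - v \<xi>)" "hs_norm s (\<lambda>\<xi>. - v \<xi>) = hs_norm s v"
  using hs_finite_cmult[OF assms, of "-1"] by simp_all

lemma hs_finite_diff: "hs_finite s v \<Longrightarrow> hs_finite s w \<Longrightarrow> hs_finite s (\<lambda>\<xi>. v \<xi> - w \<xi>)"
  using hs_finite_add[OF _ hs_finite_minus(1)] by simp

lemma hs_norm_zero [simp]: "hs_norm s (\<lambda>\<xi>. 0) = 0"
  unfolding hs_norm_eq by simp

lemma hs_finite_weaker:
  assumes "hs_finite 0 v" "s \<le> 0"
  shows "hs_finite s v" "hs_norm s v \<le> hs_norm 0 v"
proof -
  have [measurable]: "v \<in> borel_measurable lborel" and i: "integrable lborel (\<lambda>\<xi>. (cmod (v \<xi>))\<^sup>2)"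
    using assms unfolding hs_finite_def by auto
  have le: "hs_weight s \<xi> * (cmod (v \<xi>))\<^sup>2 \<le> (cmod (v \<xi>))\<^sup>2" for \<xi>
    using hs_weight_le_1[OF assms(2)] by (simp add: mult_left_le_one_le)
  have i': "integrable lborel (\<lambda>\<xi>. hs_weight s \<xi> * (cmod (v \<xi>))\<^sup>2)"
    by (rule Bochner_Integration.integrable_bound[OF i]) (use le in auto)
  then show "hs_finite s v" unfolding hs_finite_def by simp
  show "hs_norm s v \<le> hs_norm 0 v"
    unfolding hs_norm_eq using integral_mono[OF i' i le] by simp
qed

lemma hs_weighted_product_integrable:
  assumes v: "hs_finite s v" and w: "hs_finite s w"
  shows "integrable lborel (\<lambda>\<xi>. hs_weight s \<xi> * (cmod (v \<xi>) * cmod (w \<xi>)))"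
proof -
  have [measurable]: "v \<in> borel_measurable lborel" "w \<in> borel_measurable lborel"
    using v w by (auto dest: hs_finite_measurable)
  have "cmod (v \<xi>) * cmod (w \<xi>) \<le> (cmod (v \<xi>))\<^sup>2 + (cmod (w \<xi>))\<^sup>2" for \<xi>
  proof -
    have "2 * (cmod (v \<xi>) * cmod (w \<xi>)) \<le> (cmod (v \<xi>))\<^sup>2 + (cmod (w \<xi>))\<^sup>2"
      using zero_le_power2[of "cmod (v \<xi>) - cmod (w \<xi>)"] by (simp add: power2_eq_square algebra_simps)
    moreover have "0 \<le> cmod (v \<xi>) * cmod (w \<xi>)" by simp
    ultimately show ?thesis by linarith
  qed
  then have le: "hs_weight s \<xi> * (cmod (v \<xi>) * cmod (w \<xi>))
      \<le> hs_weight s \<xi> * ((cmod (v \<xi>))\<^sup>2 + (cmod (w \<xi>))\<^sup>2)" for \<xi>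
    by (intro mult_left_mono) auto
  have "integrable lborel (\<lambda>\<xi>. hs_weight s \<xi> * ((cmod (v \<xi>))\<^sup>2 + (cmod (w \<xi>))\<^sup>2))"
    using v w unfolding hs_finite_def by (simp add: distrib_left)
  then show ?thesis by (rule Bochner_Integration.integrable_bound) (use le in auto)
qed

lemma nn_integral_hs_norm_squared:
  assumes "hs_finite s u"
  shows "(\<integral>\<^sup>+\<xi>. ennreal (sqrt (hs_weight s \<xi>) * cmod (u \<xi>)) ^ 2 \<partial>lborel) = ennreal ((hs_norm s u)\<^sup>2)"
proof -
  have "(\<integral>\<^sup>+\<xi>. ennreal (sqrt (hs_weight s \<xi>) * cmod (u \<xi>)) ^ 2 \<partial>lborel)
      = (\<integral>\<^sup>+\<xi>. ennreal (hs_weight s \<xi> * (cmod (u \<xi>))\<^sup>2) \<partial>lborel)"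
    by (simp add: ennreal_power power_mult_distrib)
  also have "\<dots> = ennreal ((hs_norm s u)\<^sup>2)"
    unfolding hs_norm_squared using assms unfolding hs_finite_def by (intro nn_integral_eq_integral) auto
  finally show ?thesis .
qed

lemma hs_weighted_Cauchy_Schwarz:
  assumes v: "hs_finite s v" and w: "hs_finite s w"
  shows "(LINT \<xi>|lborel. hs_weight s \<xi> * (cmod (v \<xi>) * cmod (w \<xi>))) \<le> hs_norm s v * hs_norm s w"
proof -
  define I where "I = (LINT \<xi>|lborel. hs_weight s \<xi> * (cmod (v \<xi>) * cmod (w \<xi>)))"
  have [measurable]: "v \<in> borel_measurable lborel" "w \<in> borel_measurable lborel"
    using v w by (auto dest: hs_finite_measurable)
  have "ennreal (sqrt (hs_weight s \<xi>) * cmod (v \<xi>)) * ennreal (sqrt (hs_weight s \<xi>) * cmod (w \<xi>))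
      = ennreal (hs_weight s \<xi> * (cmod (v \<xi>) * cmod (w \<xi>)))" for \<xi>
    by (simp add: algebra_simps flip: ennreal_mult)
  then have "(\<integral>\<^sup>+\<xi>. ennreal (sqrt (hs_weight s \<xi>) * cmod (v \<xi>)) * ennreal (sqrt (hs_weight s \<xi>) * cmod (w \<xi>)) \<partial>lborel)
      = ennreal I"
    unfolding I_def using hs_weighted_product_integrable[OF v w] by (simp add: nn_integral_eq_integral)
  then have "ennreal I ^ 2 \<le> ennreal ((hs_norm s v)\<^sup>2) * ennreal ((hs_norm s w)\<^sup>2)"
    using Cauchy_Schwarz_nn_integral[of "\<lambda>\<xi>. ennreal (sqrt (hs_weight s \<xi>) * cmod (v \<xi>))" lborel
        "\<lambda>\<xi>. ennreal (sqrt (hs_weight s \<xi>) * cmod (w \<xi>))"]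
    unfolding nn_integral_hs_norm_squared[OF v] nn_integral_hs_norm_squared[OF w] by simp
  moreover have "I \<ge> 0" unfolding I_def by (auto intro!: integral_nonneg_AE)
  ultimately have "I\<^sup>2 \<le> (hs_norm s v * hs_norm s w)\<^sup>2"
    by (simp add: ennreal_power power_mult_distrib flip: ennreal_mult)
  then show "I \<le> hs_norm s v * hs_norm s w"
    by (meson hs_norm_nonneg mult_nonneg_nonneg power2_le_imp_le)
qed

lemma hs_inner_integrable:
  assumes "hs_finite s v" "hs_finite s w"
  shows "integrable lborel (\<lambda>\<xi>. hs_weight s \<xi> * Re (v \<xi> * cnj (w \<xi>)))"
proof (rule Bochner_Integration.integrable_bound[OF hs_weighted_product_integrable[OF assms]])
  show "(\<lambda>\<xi>. hs_weight s \<xi> * Re (v \<xi> * cnj (w \<xi>))) \<in> borel_measurable lborel"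
    using assms by (auto dest!: hs_finite_measurable)
  show "AE \<xi> in lborel. norm (hs_weight s \<xi> * Re (v \<xi> * cnj (w \<xi>)))
      \<le> norm (hs_weight s \<xi> * (cmod (v \<xi>) * cmod (w \<xi>)))"
    using abs_Re_le_cmod[of "v _ * cnj (w _)"] by (auto simp: abs_mult norm_mult intro!: mult_left_mono)
qed

lemma hs_inner_abs_le:
  assumes "hs_finite s v" "hs_finite s w"
  shows "\<bar>hs_inner s v w\<bar> \<le> hs_norm s v * hs_norm s w"
proof -
  have "\<bar>hs_inner s v w\<bar> \<le> (LINT \<xi>|lborel. \<bar>hs_weight s \<xi> * Re (v \<xi> * cnj (w \<xi>))\<bar>)"
    unfolding hs_inner_def by (rule integral_abs_bound)
  also have "\<dots> \<le> (LINT \<xi>|lborel. hs_weight s \<xi> * (cmod (v \<xi>) * cmod (w \<xi>)))"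
    using abs_Re_le_cmod[of "v _ * cnj (w _)"]
    by (intro integral_mono integrable_abs hs_inner_integrable hs_weighted_product_integrable assms)
       (auto simp: abs_mult norm_mult intro!: mult_left_mono)
  also have "\<dots> \<le> hs_norm s v * hs_norm s w" by (rule hs_weighted_Cauchy_Schwarz[OF assms])
  finally show ?thesis .
qed

lemma hs_inner_self: "hs_inner s v v = (hs_norm s v)\<^sup>2"
  unfolding hs_inner_def hs_norm_squared
  by (intro Bochner_Integration.integral_cong refl) (simp add: complex_mult_cnj cmod_def)

lemma hs_inner_add:
  "hs_finite s v \<Longrightarrow> hs_finite s w \<Longrightarrow> hs_finite s \<psi> \<Longrightarrow>
    hs_inner s (\<lambda>\<xi>. v \<xi> + w \<xi>) \<psi> = hs_inner s v \<psi> + hs_inner s w \<psi>"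
  unfolding hs_inner_def using hs_inner_integrable[of s v \<psi>] hs_inner_integrable[of s w \<psi>]
  by (simp add: distrib_left distrib_right flip: Bochner_Integration.integral_add)

lemma hs_inner_diff:
  "hs_finite s v \<Longrightarrow> hs_finite s w \<Longrightarrow> hs_finite s \<psi> \<Longrightarrow>
    hs_inner s (\<lambda>\<xi>. v \<xi> - w \<xi>) \<psi> = hs_inner s v \<psi> - hs_inner s w \<psi>"
  unfolding hs_inner_def using hs_inner_integrable[of s v \<psi>] hs_inner_integrable[of s w \<psi>]
  by (simp add: left_diff_distrib right_diff_distrib flip: Bochner_Integration.integral_diff)

lemma hs_inner_scaleR: "hs_inner s (\<lambda>\<xi>. c *\<^sub>R v \<xi>) \<psi> = c * hs_inner s v \<psi>"
  unfolding hs_inner_def by (simp add: scaleR_conv_of_real algebra_simps flip: integral_mult_right_zero)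

lemma hs_inner_norm_0: "hs_finite s v \<Longrightarrow> hs_finite s \<psi> \<Longrightarrow> hs_norm s v = 0 \<Longrightarrow> hs_inner s v \<psi> = 0"
  using hs_inner_abs_le[of s v \<psi>] by simp

lemma hs_norm_triangle:
  assumes "hs_finite s v" "hs_finite s w"
  shows "hs_norm s (\<lambda>\<xi>. v \<xi> + w \<xi>) \<le> hs_norm s v + hs_norm s w"
proof -
  let ?u = "\<lambda>\<xi>. v \<xi> + w \<xi>"
  have u: "hs_finite s ?u" using hs_finite_add assms by blast
  have "(hs_norm s ?u)\<^sup>2 = hs_inner s v ?u + hs_inner s w ?u"
    using hs_inner_self[of s ?u] hs_inner_add[OF assms u] by simp
  also have "\<dots> \<le> (hs_norm s v + hs_norm s w) * hs_norm s ?u"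
    using hs_inner_abs_le[OF assms(1) u] hs_inner_abs_le[OF assms(2) u] by (simp add: algebra_simps)
  finally show ?thesis
    by (metis add_nonneg_nonneg hs_norm_nonneg power2_eq_square mult_right_le_imp_le
        order.not_eq_order_implies_strict)
qed

lemma hs_norm_triangle_diff:
  "hs_finite s v \<Longrightarrow> hs_finite s w \<Longrightarrow> hs_norm s (\<lambda>\<xi>. v \<xi> - w \<xi>) \<le> hs_norm s v + hs_norm s w"
  using hs_norm_triangle[OF _ hs_finite_minus(1)] hs_finite_minus(2) by fastforce

lemma hs_norm_diff_ge:
  assumes "hs_finite s v" "hs_finite s w"
  shows "\<bar>hs_norm s v - hs_norm s w\<bar> \<le> hs_norm s (\<lambda>\<xi>. v \<xi> - w \<xi>)"
proof -
  have "hs_norm s v \<le> hs_norm s w + hs_norm s (\<lambda>\<xi>. v \<xi> - w \<xi>)"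
    using hs_norm_triangle[OF assms(2) hs_finite_diff[OF assms]] by simp
  moreover have "hs_norm s w \<le> hs_norm s v + hs_norm s (\<lambda>\<xi>. w \<xi> - v \<xi>)"
    using hs_norm_triangle[OF assms(1) hs_finite_diff[OF assms(2,1)]] by simp
  moreover have "hs_norm s (\<lambda>\<xi>. w \<xi> - v \<xi>) = hs_norm s (\<lambda>\<xi>. v \<xi> - w \<xi>)"
    using hs_finite_minus(2)[OF hs_finite_diff[OF assms]] by simp
  ultimately show ?thesis by linarith
qed

lemma CHs_hs_finite: "w \<in> CHs T s \<Longrightarrow> t \<in> {0..T} \<Longrightarrow> hs_finite s (w t)"
  unfolding CHs_def using Hs_imp_hs_finite by blast

lemma CHs_continuous_hs_norm:
  assumes w: "w \<in> CHs T s"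
  shows "continuous_on {0..T} (\<lambda>t. hs_norm s (w t))"
  unfolding continuous_on_eq_continuous_within continuous_within
proof
  fix t assume t: "t \<in> {0..T}"
  have "((\<lambda>\<tau>. hs_norm s (\<lambda>\<xi>. w \<tau> \<xi> - w t \<xi>)) \<longlongrightarrow> 0) (at t within {0..T})"
    using w t unfolding CHs_def by blast
  then show "((\<lambda>t. hs_norm s (w t)) \<longlongrightarrow> hs_norm s (w t)) (at t within {0..T})"
    by (rule metric_tendsto_imp_tendsto)
       (use hs_norm_diff_ge[OF CHs_hs_finite[OF w] CHs_hs_finite[OF w t]] in
         \<open>auto simp: dist_real_def eventually_at_filter\<close>)
qed

lemma CHs_hs_norm_bounded:
  assumes "w \<in> CHs T s"
  obtains B where "\<And>t. t \<in> {0..T} \<Longrightarrow> hs_norm s (w t) \<le> B"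
proof -
  have "bounded ((\<lambda>t. hs_norm s (w t)) ` {0..T})"
    by (intro compact_imp_bounded compact_continuous_image CHs_continuous_hs_norm assms) simp
  then show ?thesis using that unfolding bounded_iff by fastforce
qed

lemma hs_norm_le_chs_norm:
  assumes "\<And>t. t \<in> {0..T} \<Longrightarrow> hs_norm s (X t) \<le> B" "t \<in> {0..T}"
  shows "hs_norm s (X t) \<le> chs_norm T s X"
  unfolding chs_norm_def using assms by (intro cSUP_upper bdd_aboveI2[where M=B]) auto

lemma hs_norm_le_chs_norm_CHs: "w \<in> CHs T s \<Longrightarrow> t \<in> {0..T} \<Longrightarrow> hs_norm s (w t) \<le> chs_norm T s w"
  by (metis CHs_hs_norm_bounded hs_norm_le_chs_norm)

text \<open>The supremum in \<open>chs_norm\<close> bounds the pointwise norms only because the three curves are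
  continuous, hence bounded on \<open>[0, T]\<close>.\<close>
lemma hs_inner_combination_bound:
  assumes A: "A \<in> CHs T s" and B: "B \<in> CHs T s" and C: "C \<in> CHs T s"
    and t: "t \<in> {0..T}" and \<psi>: "hs_finite s \<psi>"
    and M: "chs_norm T s (\<lambda>t \<xi>. A t \<xi> - (a *\<^sub>R B t \<xi> + b *\<^sub>R C t \<xi>)) \<le> M"
  shows "\<bar>hs_inner s (A t) \<psi> - (a * hs_inner s (B t) \<psi> + b * hs_inner s (C t) \<psi>)\<bar> \<le> M * hs_norm s \<psi>"
proof -
  obtain bA bB bC where bA: "\<And>t. t \<in> {0..T} \<Longrightarrow> hs_norm s (A t) \<le> bA"
    and bB: "\<And>t. t \<in> {0..T} \<Longrightarrow> hs_norm s (B t) \<le> bB"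
    and bC: "\<And>t. t \<in> {0..T} \<Longrightarrow> hs_norm s (C t) \<le> bC"
    by (metis CHs_hs_norm_bounded A B C)
  define X where "X t = (\<lambda>\<xi>. A t \<xi> - (a *\<^sub>R B t \<xi> + b *\<^sub>R C t \<xi>))" for t
  have fin: "hs_finite s (A t)" "hs_finite s (\<lambda>\<xi>. a *\<^sub>R B t \<xi>)" "hs_finite s (\<lambda>\<xi>. b *\<^sub>R C t \<xi>)"
    if "t \<in> {0..T}" for t
    using CHs_hs_finite[OF _ that] A B C hs_finite_scaleR(1) by blast+
  have "hs_norm s (X t) \<le> bA + (\<bar>a\<bar> * bB + \<bar>b\<bar> * bC)" if "t \<in> {0..T}" for t
  proof -
    have "hs_norm s (X t) \<le> hs_norm s (A t) + hs_norm s (\<lambda>\<xi>. a *\<^sub>R B t \<xi> + b *\<^sub>R C t \<xi>)"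
      unfolding X_def by (rule hs_norm_triangle_diff[OF fin(1)[OF that] hs_finite_add[OF fin(2,3)[OF that]]])
    also have "\<dots> \<le> hs_norm s (A t) + (hs_norm s (\<lambda>\<xi>. a *\<^sub>R B t \<xi>) + hs_norm s (\<lambda>\<xi>. b *\<^sub>R C t \<xi>))"
      by (intro add_left_mono hs_norm_triangle fin that)
    also have "\<dots> \<le> bA + (\<bar>a\<bar> * bB + \<bar>b\<bar> * bC)"
      using bA bB bC that CHs_hs_finite[OF B that] CHs_hs_finite[OF C that]
      by (simp add: hs_finite_scaleR(2) add_mono mult_left_mono)
    finally show ?thesis .
  qed
  then have "hs_norm s (X t) \<le> M"
    using hs_norm_le_chs_norm[of T s X, OF _ t] M unfolding X_def by fastforce
  moreover have "hs_inner s (X t) \<psi> = hs_inner s (A t) \<psi> - (a * hs_inner s (B t) \<psi> + b * hs_inner s (C t) \<psi>)"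
    unfolding X_def using fin[OF t] \<psi>
    by (simp add: hs_inner_diff hs_inner_add hs_finite_add hs_inner_scaleR)
  moreover have "hs_finite s (X t)"
    unfolding X_def using fin[OF t] by (intro hs_finite_diff hs_finite_add)
  ultimately show ?thesis
    using hs_inner_abs_le[OF _ \<psi>, of "X t"] by (metis hs_norm_nonneg mult_right_mono order_trans)
qed

lemma hs_inner_diff3_bound:
  assumes "A \<in> CHs T s" "B \<in> CHs T s" "C \<in> CHs T s" "t \<in> {0..T}" "hs_finite s \<psi>"
    and "chs_norm T s (\<lambda>t \<xi>. A t \<xi> - B t \<xi> - C t \<xi>) \<le> M"
  shows "\<bar>hs_inner s (A t) \<psi> - hs_inner s (B t) \<psi> - hs_inner s (C t) \<psi>\<bar> \<le> M * hs_norm s \<psi>"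
  using hs_inner_combination_bound[OF assms(1-5), of 1 1 M] assms(6) by (simp add: diff_diff_eq)

lemma hs_inner_combination_eq:
  assumes "A \<in> CHs T s" "B \<in> CHs T s" "C \<in> CHs T s" "t \<in> {0..T}" "hs_finite s \<psi>"
    and "chs_norm T s (\<lambda>t \<xi>. A t \<xi> - (a *\<^sub>R B t \<xi> + b *\<^sub>R C t \<xi>)) = 0"
  shows "hs_inner s (A t) \<psi> = a * hs_inner s (B t) \<psi> + b * hs_inner s (C t) \<psi>"
  using hs_inner_combination_bound[OF assms(1-5), of a b 0] assms(6) by simp

section \<open>The nonlinearity and Duhamel integrals\<close>

lemma hs_finite_0_reflect:
  assumes "hs_finite 0 f"
  shows "hs_finite 0 (\<lambda>\<zeta>. f (x - \<zeta>))" "hs_norm 0 (\<lambda>\<zeta>. f (x - \<zeta>)) = hs_norm 0 f"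
proof -
  have [measurable]: "f \<in> borel_measurable lborel" and i: "integrable lborel (\<lambda>\<xi>. (cmod (f \<xi>))\<^sup>2)"
    using assms unfolding hs_finite_def by auto
  have "integrable lborel (\<lambda>\<zeta>. (cmod (f (x + (-1) * \<zeta>)))\<^sup>2)"
    by (rule lborel_integrable_real_affine[OF i]) simp
  then show "hs_finite 0 (\<lambda>\<zeta>. f (x - \<zeta>))" unfolding hs_finite_def by simp measurable
  have "(LINT \<xi>|lborel. (cmod (f \<xi>))\<^sup>2) = \<bar>-1\<bar> *\<^sub>R (LINT \<zeta>|lborel. (cmod (f (x + (-1) * \<zeta>)))\<^sup>2)"
    by (rule lborel_integral_real_affine) simp
  then show "hs_norm 0 (\<lambda>\<zeta>. f (x - \<zeta>)) = hs_norm 0 f" unfolding hs_norm_eq by simp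
qed

lemma convolution_bound:
  assumes f: "hs_finite 0 f" and g: "hs_finite 0 g"
  shows "integrable lborel (\<lambda>\<zeta>. f (x - \<zeta>) * g \<zeta>)"
    "cmod (LINT \<zeta>|lborel. f (x - \<zeta>) * g \<zeta>) \<le> hs_norm 0 f * hs_norm 0 g"
proof -
  note fx = hs_finite_0_reflect[OF f, of x]
  note cs = hs_weighted_product_integrable[OF fx(1) g] hs_weighted_Cauchy_Schwarz[OF fx(1) g]
  have [measurable]: "(\<lambda>\<zeta>. f (x - \<zeta>)) \<in> borel_measurable lborel" "g \<in> borel_measurable lborel"
    using fx(1) g by (auto dest: hs_finite_measurable)
  show i: "integrable lborel (\<lambda>\<zeta>. f (x - \<zeta>) * g \<zeta>)"
    by (rule Bochner_Integration.integrable_bound[OF cs(1)]) (auto simp: norm_mult)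
  have "cmod (LINT \<zeta>|lborel. f (x - \<zeta>) * g \<zeta>) \<le> (LINT \<zeta>|lborel. cmod (f (x - \<zeta>) * g \<zeta>))"
    by (rule integral_norm_bound)
  also have "\<dots> \<le> hs_norm 0 f * hs_norm 0 g"
    using cs(2) fx(2) by (simp add: norm_mult)
  finally show "cmod (LINT \<zeta>|lborel. f (x - \<zeta>) * g \<zeta>) \<le> hs_norm 0 f * hs_norm 0 g" .
qed

lemma norm_nonlin_factor: "cmod (\<i> * complex_of_real \<xi> / complex_of_real (4 * pi)) = \<bar>\<xi>\<bar> / (4 * pi)"
  by (simp add: norm_mult norm_divide)

lemma norm_nonlin_le:
  assumes "hs_finite 0 (w \<tau>)"
  shows "cmod (nonlin w \<tau> \<xi>) \<le> \<bar>\<xi>\<bar> / (4 * pi) * (hs_norm 0 (w \<tau>))\<^sup>2"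
  unfolding nonlin_def norm_mult norm_nonlin_factor power2_eq_square
  by (intro mult_left_mono convolution_bound assms) auto

lemma norm_nonlin_diff_le:
  assumes u: "hs_finite 0 (u \<tau>)" and v: "hs_finite 0 (v \<tau>)"
  shows "cmod (nonlin u \<tau> \<xi> - nonlin v \<tau> \<xi>)
    \<le> \<bar>\<xi>\<bar> / (4 * pi) * (hs_norm 0 (\<lambda>\<zeta>. u \<tau> \<zeta> - v \<tau> \<zeta>) * (hs_norm 0 (u \<tau>) + hs_norm 0 (v \<tau>)))"
proof -
  define d where "d = (\<lambda>\<zeta>. u \<tau> \<zeta> - v \<tau> \<zeta>)"
  have d: "hs_finite 0 d" unfolding d_def using hs_finite_diff[OF u v] .
  have "(LINT \<zeta>|lborel. u \<tau> (\<xi> - \<zeta>) * u \<tau> \<zeta>) - (LINT \<zeta>|lborel. v \<tau> (\<xi> - \<zeta>) * v \<tau> \<zeta>)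
      = (LINT \<zeta>|lborel. d (\<xi> - \<zeta>) * u \<tau> \<zeta> + v \<tau> (\<xi> - \<zeta>) * d \<zeta>)"
    using convolution_bound(1)[OF u u] convolution_bound(1)[OF v v]
    by (simp add: d_def algebra_simps flip: Bochner_Integration.integral_diff)
  also have "\<dots> = (LINT \<zeta>|lborel. d (\<xi> - \<zeta>) * u \<tau> \<zeta>) + (LINT \<zeta>|lborel. v \<tau> (\<xi> - \<zeta>) * d \<zeta>)"
    using convolution_bound(1)[OF d u] convolution_bound(1)[OF v d] by simp
  finally have "cmod (nonlin u \<tau> \<xi> - nonlin v \<tau> \<xi>) = \<bar>\<xi>\<bar> / (4 * pi) *
      cmod ((LINT \<zeta>|lborel. d (\<xi> - \<zeta>) * u \<tau> \<zeta>) + (LINT \<zeta>|lborel. v \<tau> (\<xi> - \<zeta>) * d \<zeta>))"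
    unfolding nonlin_def by (simp only: norm_mult norm_nonlin_factor flip: right_diff_distrib)
  also have "\<dots> \<le> \<bar>\<xi>\<bar> / (4 * pi) * (hs_norm 0 d * hs_norm 0 (u \<tau>) + hs_norm 0 (v \<tau>) * hs_norm 0 d)"
    by (intro mult_left_mono order.trans[OF norm_triangle_ineq] add_mono convolution_bound d u v) auto
  finally show ?thesis unfolding d_def by (simp add: algebra_simps)
qed

lemma nonlin_scaleR: "nonlin (\<lambda>\<tau> \<xi>. c *\<^sub>R w \<tau> \<xi>) \<tau> \<xi> = c\<^sup>2 *\<^sub>R nonlin w \<tau> \<xi>"
proof -
  have "(LINT \<zeta>|lborel. c *\<^sub>R w \<tau> (\<xi> - \<zeta>) * c *\<^sub>R w \<tau> \<zeta>) = (LINT \<zeta>|lborel. c\<^sup>2 *\<^sub>R (w \<tau> (\<xi> - \<zeta>) * w \<tau> \<zeta>))"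
    by (intro Bochner_Integration.integral_cong refl) (simp add: power2_eq_square)
  also have "\<dots> = c\<^sup>2 *\<^sub>R (LINT \<zeta>|lborel. w \<tau> (\<xi> - \<zeta>) * w \<tau> \<zeta>)" by simp
  finally show ?thesis unfolding nonlin_def by (simp add: scaleR_conv_of_real algebra_simps)
qed

lemma S0sym_measurable [measurable]: "(\<lambda>\<xi>. S0sym \<eta> t \<xi>) \<in> borel_measurable lborel"
  unfolding S0sym_def by measurable

lemma norm_S0sym_le:
  assumes "\<eta> > 0" "0 \<le> t" "t \<le> T"
  shows "cmod (S0sym \<eta> t \<xi>) \<le> exp (\<eta> * T / 4)"
proof -
  have "\<xi>\<^sup>2 - \<bar>\<xi>\<bar> \<ge> - 1 / 4"
    using zero_le_power2[of "\<bar>\<xi>\<bar> - 1 / 2"] by (simp add: power2_eq_square algebra_simps)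
  then have "\<eta> * t * (- (\<xi>\<^sup>2 - \<bar>\<xi>\<bar>)) \<le> \<eta> * t * (1 / 4)"
    using assms by (intro mult_left_mono) auto
  also have "\<dots> \<le> \<eta> * T / 4" using assms by (simp add: mult_left_mono)
  finally show ?thesis unfolding S0sym_def by (simp add: algebra_simps)
qed

lemma hs_finite_S0sym_mult:
  assumes "\<eta> > 0" "0 \<le> t" "t \<le> T" "hs_finite 0 \<phi>"
  shows "hs_finite 0 (\<lambda>\<xi>. S0sym \<eta> t \<xi> * \<phi> \<xi>)"
    "hs_norm 0 (\<lambda>\<xi>. S0sym \<eta> t \<xi> * \<phi> \<xi>) \<le> exp (\<eta> * T / 4) * hs_norm 0 \<phi>"
proof -
  have [measurable]: "\<phi> \<in> borel_measurable lborel" using assms(4) by (rule hs_finite_measurable)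
  have "AE \<xi> in lborel. cmod (S0sym \<eta> t \<xi> * \<phi> \<xi>) \<le> exp (\<eta> * T / 4) * cmod (\<phi> \<xi>)"
    using norm_S0sym_le[OF assms(1-3)] by (auto simp: norm_mult intro!: mult_right_mono)
  from hs_finite_dominated[OF _ assms(4) _ this] show "hs_finite 0 (\<lambda>\<xi>. S0sym \<eta> t \<xi> * \<phi> \<xi>)"
    "hs_norm 0 (\<lambda>\<xi>. S0sym \<eta> t \<xi> * \<phi> \<xi>) \<le> exp (\<eta> * T / 4) * hs_norm 0 \<phi>"
    by auto
qed

lemma exp_symbol_le:
  fixes \<eta> r T \<xi> :: real
  assumes "\<eta> > 0" "0 \<le> r" "r \<le> T"
  shows "exp (- \<eta> * (\<xi>\<^sup>2 - \<bar>\<xi>\<bar>) * r) \<le> exp (\<eta> * T / 2) * exp (- (\<eta> * \<xi>\<^sup>2 / 2) * r)"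
proof -
  have "\<bar>\<xi>\<bar> - \<xi>\<^sup>2 / 2 \<le> 1 / 2"
    using zero_le_power2[of "\<bar>\<xi>\<bar> - 1"] by (simp add: power2_eq_square algebra_simps)
  then have "\<eta> * r * (\<bar>\<xi>\<bar> - \<xi>\<^sup>2 / 2) \<le> \<eta> * r * (1 / 2)"
    using assms by (intro mult_left_mono) auto
  also have "\<dots> \<le> \<eta> * T / 2" using assms by (simp add: mult_left_mono)
  finally show ?thesis by (simp add: algebra_simps flip: exp_add)
qed

lemma set_integrable_exp_decay: "set_integrable lborel {0..t::real} (\<lambda>\<tau>. exp (- (c::real) * (t - \<tau>)))"
  by (intro borel_integrable_atLeastAtMost' continuous_intros)

lemma integral_exp_decay_le_length:
  fixes c t :: real
  assumes "c \<ge> 0" "t \<ge> 0"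
  shows "(LINT \<tau>:{0..t}|lborel. exp (- c * (t - \<tau>))) \<le> t"
proof -
  have "(LINT \<tau>:{0..t}|lborel. exp (- c * (t - \<tau>))) \<le> (LINT \<tau>:{0..t}|lborel. 1)"
  proof (rule set_integral_mono[OF set_integrable_exp_decay])
    show "set_integrable lborel {0..t} (\<lambda>\<tau>. 1::real)"
      by (intro borel_integrable_atLeastAtMost' continuous_intros)
  qed (use assms in \<open>auto simp: mult_nonneg_nonneg\<close>)
  also have "\<dots> = t" using assms by (simp add: set_lebesgue_integral_def)
  finally show ?thesis .
qed

lemma integral_exp_decay_le_inverse:
  fixes c t :: real
  assumes "c > 0" "t \<ge> 0"
  shows "(LINT \<tau>:{0..t}|lborel. exp (- c * (t - \<tau>))) \<le> 1 / c"
proof -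
  have "(LINT \<tau>:{0..t}|lborel. exp (- c * (t - \<tau>))) = (\<integral>\<tau>. exp (- c * (t - \<tau>)) * indicator {0..t} \<tau> \<partial>lborel)"
    unfolding set_lebesgue_integral_def by (intro Bochner_Integration.integral_cong) (auto simp: indicator_def)
  also have "\<dots> = exp (- c * (t - t)) / c - exp (- c * (t - 0)) / c"
  proof (rule integral_FTC_Icc_real)
    fix x
    show "((\<lambda>\<tau>. exp (- c * (t - \<tau>)) / c) has_real_derivative exp (- c * (t - x))) (at x)"
      using assms by (auto intro!: derivative_eq_intros)
  qed (use assms in \<open>auto intro!: continuous_intros\<close>)
  also have "\<dots> \<le> 1 / c" using assms by simp
  finally show ?thesis .
qed

text \<open>Bound for the Duhamel kernel \<open>\<bar>\<xi>\<bar> \<integral>\<^sub>0\<^sup>t \<bar>S\<^sub>0(t - \<tau>)\<bar> d\<tau>\<close>, uniform in \<open>t \<le> T\<close> and square integrable in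
  \<open>\<xi>\<close>: the integral is at most \<open>t\<close> for \<open>\<bar>\<xi>\<bar> \<le> 1\<close> and at most \<open>2 / (\<eta> \<xi>\<^sup>2)\<close> otherwise.\<close>
definition duhamel_weight :: "real \<Rightarrow> real \<Rightarrow> real \<Rightarrow> real" where
  "duhamel_weight \<eta> T \<xi> = exp (\<eta> * T / 2) * (2 * T + 4 / \<eta>) / sqrt (1 + \<xi>\<^sup>2)"

lemma abs_mult_integral_heat_le:
  assumes "\<eta> > 0" "0 \<le> t" "t \<le> T"
  shows "\<bar>\<xi>\<bar> * (LINT \<tau>:{0..t}|lborel. exp (- (\<eta> * \<xi>\<^sup>2 / 2) * (t - \<tau>))) \<le> (2 * T + 4 / \<eta>) / sqrt (1 + \<xi>\<^sup>2)"
proof (cases "\<bar>\<xi>\<bar> \<le> 1")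
  case True
  have "sqrt (1 + \<xi>\<^sup>2) \<le> sqrt (2\<^sup>2)"
    using True abs_square_le_1[of \<xi>] by (intro real_sqrt_le_mono) simp
  then have "T * sqrt (1 + \<xi>\<^sup>2) \<le> T * 2" using assms by (intro mult_left_mono) auto
  also have "\<dots> \<le> 2 * T + 4 / \<eta>" using assms by simp
  finally have "T \<le> (2 * T + 4 / \<eta>) / sqrt (1 + \<xi>\<^sup>2)"
    by (simp add: pos_le_divide_eq add_pos_nonneg)
  moreover have "\<bar>\<xi>\<bar> * (LINT \<tau>:{0..t}|lborel. exp (- (\<eta> * \<xi>\<^sup>2 / 2) * (t - \<tau>))) \<le> 1 * t"
    using True assms integral_exp_decay_le_length[of "\<eta> * \<xi>\<^sup>2 / 2" t]
    by (intro mult_mono) (auto simp: set_lebesgue_integral_def intro!: integral_nonneg_AE)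
  ultimately show ?thesis using assms by linarith
next
  case False
  have "sqrt (1 + \<xi>\<^sup>2) \<le> sqrt ((2 * \<bar>\<xi>\<bar>)\<^sup>2)"
    using False abs_square_le_1[of \<xi>] by (intro real_sqrt_le_mono) (simp add: power_mult_distrib)
  also have "\<dots> = 2 * \<bar>\<xi>\<bar>" by (simp only: real_sqrt_abs)
  finally have "2 / (\<eta> * \<bar>\<xi>\<bar>) * sqrt (1 + \<xi>\<^sup>2) \<le> 2 / (\<eta> * \<bar>\<xi>\<bar>) * (2 * \<bar>\<xi>\<bar>)"
    using assms by (intro mult_left_mono) auto
  also have "\<dots> = 4 / \<eta>" using False by simp
  also have "\<dots> \<le> 2 * T + 4 / \<eta>" using assms by simp
  finally have "2 / (\<eta> * \<bar>\<xi>\<bar>) \<le> (2 * T + 4 / \<eta>) / sqrt (1 + \<xi>\<^sup>2)"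
    by (simp add: pos_le_divide_eq add_pos_nonneg)
  moreover have "\<bar>\<xi>\<bar> * (LINT \<tau>:{0..t}|lborel. exp (- (\<eta> * \<xi>\<^sup>2 / 2) * (t - \<tau>)))
      \<le> \<bar>\<xi>\<bar> * (1 / (\<eta> * (\<bar>\<xi>\<bar> * \<bar>\<xi>\<bar>) / 2))"
    using False assms by (simp only: abs_mult_self_eq power2_eq_square)
       (intro mult_left_mono integral_exp_decay_le_inverse; auto simp: zero_less_mult_iff)
  moreover have "\<bar>\<xi>\<bar> * (1 / (\<eta> * (\<bar>\<xi>\<bar> * \<bar>\<xi>\<bar>) / 2)) = 2 / (\<eta> * \<bar>\<xi>\<bar>)"
    using False by (simp add: field_simps del: abs_mult_self_eq)
  ultimately show ?thesis by linarith
qed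

lemma duhamel_kernel_le:
  assumes "\<eta> > 0" "0 \<le> t" "t \<le> T"
  shows "\<bar>\<xi>\<bar> * (LINT \<tau>:{0..t}|lborel. exp (- \<eta> * (\<xi>\<^sup>2 - \<bar>\<xi>\<bar>) * (t - \<tau>))) \<le> duhamel_weight \<eta> T \<xi>"
proof -
  define E where "E = exp (\<eta> * T / 2)"
  have "(LINT \<tau>:{0..t}|lborel. exp (- \<eta> * (\<xi>\<^sup>2 - \<bar>\<xi>\<bar>) * (t - \<tau>)))
      \<le> (LINT \<tau>:{0..t}|lborel. E * exp (- (\<eta> * \<xi>\<^sup>2 / 2) * (t - \<tau>)))"
    using set_integrable_exp_decay[of t "\<eta> * (\<xi>\<^sup>2 - \<bar>\<xi>\<bar>)"] assms unfolding E_def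
    by (intro set_integral_mono set_integrable_mult_right set_integrable_exp_decay exp_symbol_le) auto
  also have "\<dots> = E * (LINT \<tau>:{0..t}|lborel. exp (- (\<eta> * \<xi>\<^sup>2 / 2) * (t - \<tau>)))"
    by (simp add: set_lebesgue_integral_def)
  finally have "\<bar>\<xi>\<bar> * (LINT \<tau>:{0..t}|lborel. exp (- \<eta> * (\<xi>\<^sup>2 - \<bar>\<xi>\<bar>) * (t - \<tau>)))
      \<le> \<bar>\<xi>\<bar> * (E * (LINT \<tau>:{0..t}|lborel. exp (- (\<eta> * \<xi>\<^sup>2 / 2) * (t - \<tau>))))"
    by (rule mult_left_mono) simp
  also have "\<dots> = E * (\<bar>\<xi>\<bar> * (LINT \<tau>:{0..t}|lborel. exp (- (\<eta> * \<xi>\<^sup>2 / 2) * (t - \<tau>))))"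
    by (rule mult.left_commute)
  also have "\<dots> \<le> E * ((2 * T + 4 / \<eta>) / sqrt (1 + \<xi>\<^sup>2))"
    by (intro mult_left_mono abs_mult_integral_heat_le assms) (simp add: E_def)
  finally show ?thesis by (simp add: duhamel_weight_def E_def)
qed

lemma hs_finite_duhamel_weight:
  assumes "\<eta> > 0"
  shows "hs_finite 0 (\<lambda>\<xi>. complex_of_real (duhamel_weight \<eta> T \<xi>))"
proof -
  define K where "K = exp (\<eta> * T / 2) * (2 * T + 4 / \<eta>)"
  have "(cmod (complex_of_real (duhamel_weight \<eta> T \<xi>)))\<^sup>2 = (duhamel_weight \<eta> T \<xi>)\<^sup>2" for \<xi>
    by simp
  also have "(duhamel_weight \<eta> T \<xi>)\<^sup>2 = K\<^sup>2 / (sqrt (1 + \<xi>\<^sup>2))\<^sup>2" for \<xi>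
    unfolding duhamel_weight_def K_def[symmetric] by (rule power_divide)
  also have "K\<^sup>2 / (sqrt (1 + \<xi>\<^sup>2))\<^sup>2 = K\<^sup>2 * inverse (1 + \<xi>\<^sup>2)" for \<xi> :: real
    by (simp add: add_nonneg_nonneg divide_inverse)
  moreover have "integrable lborel (\<lambda>\<xi>::real. K\<^sup>2 * inverse (1 + \<xi>\<^sup>2))"
    using integrable_inverse_1_plus_square by (simp add: set_integrable_def)
  moreover have "(\<lambda>\<xi>. complex_of_real (duhamel_weight \<eta> T \<xi>)) \<in> borel_measurable lborel"
    unfolding duhamel_weight_def by measurable
  ultimately show ?thesis unfolding hs_finite_def by simp
qed

definition duhamel_const :: "real \<Rightarrow> real \<Rightarrow> real" where
  "duhamel_const \<eta> T = hs_norm 0 (\<lambda>\<xi>. complex_of_real (duhamel_weight \<eta> T \<xi>)) / (4 * pi)"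

lemma duhamel_const_nonneg: "duhamel_const \<eta> T \<ge> 0"
  unfolding duhamel_const_def by simp

lemma norm_duhamel_integral_le:
  assumes "\<eta> > 0" "0 \<le> t" "t \<le> T" "M \<ge> 0"
    and si: "set_integrable lborel {0..t} (\<lambda>\<tau>. S0sym \<eta> (t - \<tau>) \<xi> * G \<tau>)"
    and G: "\<And>\<tau>. \<tau> \<in> {0..t} \<Longrightarrow> cmod (G \<tau>) \<le> \<bar>\<xi>\<bar> * M"
  shows "cmod (LINT \<tau>:{0..t}|lborel. S0sym \<eta> (t - \<tau>) \<xi> * G \<tau>) \<le> M * duhamel_weight \<eta> T \<xi>"
proof -
  have "cmod (LINT \<tau>:{0..t}|lborel. S0sym \<eta> (t - \<tau>) \<xi> * G \<tau>)
      \<le> (LINT \<tau>:{0..t}|lborel. cmod (S0sym \<eta> (t - \<tau>) \<xi> * G \<tau>))"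
    by (rule set_integral_norm_bound[OF si])
  also have "\<dots> \<le> (LINT \<tau>:{0..t}|lborel. M * (\<bar>\<xi>\<bar> * exp (- \<eta> * (\<xi>\<^sup>2 - \<bar>\<xi>\<bar>) * (t - \<tau>))))"
  proof (rule set_integral_mono)
    show "set_integrable lborel {0..t} (\<lambda>\<tau>. cmod (S0sym \<eta> (t - \<tau>) \<xi> * G \<tau>))"
      using set_integrable_norm[OF si] .
    show "set_integrable lborel {0..t} (\<lambda>\<tau>. M * (\<bar>\<xi>\<bar> * exp (- \<eta> * (\<xi>\<^sup>2 - \<bar>\<xi>\<bar>) * (t - \<tau>))))"
      using set_integrable_exp_decay[of t "\<eta> * (\<xi>\<^sup>2 - \<bar>\<xi>\<bar>)"]
      by (intro set_integrable_mult_right) simp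
  qed (use G in \<open>auto simp: S0sym_def norm_mult mult_ac intro!: mult_left_mono\<close>)
  also have "\<dots> = M * (\<bar>\<xi>\<bar> * (LINT \<tau>:{0..t}|lborel. exp (- \<eta> * (\<xi>\<^sup>2 - \<bar>\<xi>\<bar>) * (t - \<tau>))))"
    by (simp add: set_lebesgue_integral_def)
  also have "\<dots> \<le> M * duhamel_weight \<eta> T \<xi>"
    using duhamel_kernel_le assms by (intro mult_left_mono)
  finally show ?thesis .
qed

lemma duhamel_integral_hs_bound:
  assumes "\<eta> > 0" "0 \<le> t" "t \<le> T" "M \<ge> 0"
    and v [measurable]: "v \<in> borel_measurable lborel"
    and ae: "AE \<xi> in lborel. set_integrable lborel {0..t} (\<lambda>\<tau>. S0sym \<eta> (t - \<tau>) \<xi> * G \<tau> \<xi>)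
                    \<and> cmod (v \<xi>) = cmod (LINT \<tau>:{0..t}|lborel. S0sym \<eta> (t - \<tau>) \<xi> * G \<tau> \<xi>)"
    and G: "\<And>\<tau> \<xi>. \<tau> \<in> {0..t} \<Longrightarrow> cmod (G \<tau> \<xi>) \<le> \<bar>\<xi>\<bar> * M"
  shows "hs_finite 0 v" "hs_norm 0 v \<le> 4 * pi * M * duhamel_const \<eta> T"
proof -
  have "AE \<xi> in lborel. cmod (v \<xi>) \<le> M * cmod (complex_of_real (duhamel_weight \<eta> T \<xi>))"
    using ae
  proof eventually_elim
    case (elim \<xi>)
    have "cmod (v \<xi>) \<le> M * duhamel_weight \<eta> T \<xi>"
      using norm_duhamel_integral_le[OF assms(1-4), of \<xi> "\<lambda>\<tau>. G \<tau> \<xi>"] elim G by simp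
    also have "\<dots> \<le> M * cmod (complex_of_real (duhamel_weight \<eta> T \<xi>))"
      using assms(4) by (intro mult_left_mono) auto
    finally show ?case .
  qed
  note dom = hs_finite_dominated[OF v hs_finite_duhamel_weight[OF assms(1)] assms(4) this]
  show "hs_finite 0 v" by (rule dom(1))
  have "4 * pi * M * duhamel_const \<eta> T = M * hs_norm 0 (\<lambda>\<xi>. complex_of_real (duhamel_weight \<eta> T \<xi>))"
    by (simp add: duhamel_const_def)
  then show "hs_norm 0 v \<le> 4 * pi * M * duhamel_const \<eta> T" using dom(2) by linarith
qed

section \<open>Small solutions and their Picard expansion\<close>

lemma continuity_bootstrap:
  fixes g :: "real \<Rightarrow> real"
  assumes cont: "continuous_on {0..T} g" and g0: "g 0 < b"
    and step: "\<And>t. t \<in> {0..T} \<Longrightarrow> (\<And>\<tau>. \<tau> \<in> {0..t} \<Longrightarrow> g \<tau> \<le> b) \<Longrightarrow> g t < b"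
    and t: "t \<in> {0..T}"
  shows "g t \<le> b"
proof (rule ccontr)
  let ?Z = "{0..T} \<inter> g -` {b..}"
  assume "\<not> g t \<le> b"
  then have ne: "?Z \<noteq> {}" using t by auto
  have "closed ?Z" by (rule continuous_closed_preimage[OF cont]) auto
  then have "compact ({0..T} \<inter> ?Z)" by (intro compact_Int_closed) auto
  then have "compact ?Z" by (simp only: Int_left_absorb)
  then obtain t0 where t0: "t0 \<in> ?Z" and first: "\<And>t. t \<in> ?Z \<Longrightarrow> t0 \<le> t"
    using compact_attains_inf[OF _ ne] by blast
  have t0_pos: "t0 > 0" using t0 g0 by (cases "t0 = 0") auto
  have below: "g \<tau> < b" if "\<tau> \<in> {0..<t0}" for \<tau>
  proof (rule ccontr)
    assume "\<not> g \<tau> < b"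
    then have "\<tau> \<in> ?Z" using that t0 by auto
    then show False using first[of \<tau>] that by simp
  qed
  have at_t0: "g t0 \<le> b"
  proof (rule tendsto_upperbound)
    have "(g \<longlongrightarrow> g t0) (at t0 within {0..T})" using cont t0 unfolding continuous_on_def by blast
    then have "(g \<longlongrightarrow> g t0) (at t0 within {0..t0})" by (rule tendsto_within_subset) (use t0 in auto)
    then show "(g \<longlongrightarrow> g t0) (at_left t0)" using at_within_Icc_at_left[OF t0_pos] by simp
    show "eventually (\<lambda>\<tau>. g \<tau> \<le> b) (at_left t0)"
      using eventually_at_left_real[OF t0_pos]
      by eventually_elim (simp add: below less_imp_le)
  qed simp
  have "g t0 < b"
  proof (rule step)
    show "t0 \<in> {0..T}" using t0 by simp
    fix \<tau> assume "\<tau> \<in> {0..t0}"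
    then show "g \<tau> \<le> b" using at_t0 below[of \<tau>] by (cases "\<tau> = t0") auto
  qed
  then show False using t0 by simp
qed

lemma set_integral_singleton_0: "(LINT \<tau>:{0::real}|lborel. f \<tau>) = (0::complex)"
proof -
  have "AE \<tau> in lborel. indicator {0::real} \<tau> *\<^sub>R f \<tau> = 0"
    using AE_lborel_singleton[of 0] by eventually_elim (auto simp: indicator_def)
  then show ?thesis unfolding set_lebesgue_integral_def by (simp add: integral_eq_zero_AE)
qed

lemma mild_solution_initial:
  assumes "mild_solution \<eta> T \<phi> u" "T \<ge> 0" "hs_finite 0 \<phi>" "hs_finite 0 (u 0)"
  shows "hs_norm 0 (u 0) \<le> hs_norm 0 \<phi>"
proof -
  have [measurable]: "u 0 \<in> borel_measurable lborel"
    using assms(4) by (rule hs_finite_measurable)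
  have S0: "S0sym \<eta> 0 \<xi> = 1" for \<xi> unfolding S0sym_def by simp
  have "0 \<in> {0..T}" using assms(2) by simp
  from bspec[OF assms(1)[unfolded mild_solution_def] this]
  have "AE \<xi> in lborel. u 0 \<xi> = S0sym \<eta> 0 \<xi> * \<phi> \<xi> - (LINT \<tau>:{0..0}|lborel. S0sym \<eta> (0 - \<tau>) \<xi> * nonlin u \<tau> \<xi>)"
    by eventually_elim blast
  then have "AE \<xi> in lborel. cmod (u 0 \<xi>) \<le> 1 * cmod (\<phi> \<xi>)"
    by eventually_elim (simp add: S0 set_integral_singleton_0)
  from hs_finite_dominated(2)[OF _ assms(3) _ this] show ?thesis by simp
qed

lemma mild_solution_duhamel_bound:
  assumes "\<eta> > 0" "0 \<le> t" "t \<le> T" and mild: "mild_solution \<eta> T \<phi> u" and \<phi>: "hs_finite 0 \<phi>"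
    and u: "\<And>\<tau>. \<tau> \<in> {0..t} \<Longrightarrow> hs_finite 0 (u \<tau>) \<and> hs_norm 0 (u \<tau>) \<le> B"
  shows "hs_norm 0 (\<lambda>\<xi>. u t \<xi> - S0sym \<eta> t \<xi> * \<phi> \<xi>) \<le> duhamel_const \<eta> T * B\<^sup>2"
proof -
  have [measurable]: "\<phi> \<in> borel_measurable lborel" "u t \<in> borel_measurable lborel"
    using \<phi> u[of t] assms(2) by (auto dest: hs_finite_measurable)
  have "t \<in> {0..T}" using assms(2,3) by simp
  from bspec[OF mild[unfolded mild_solution_def] this]
  have "AE \<xi> in lborel. set_integrable lborel {0..t} (\<lambda>\<tau>. S0sym \<eta> (t - \<tau>) \<xi> * nonlin u \<tau> \<xi>)
      \<and> cmod (u t \<xi> - S0sym \<eta> t \<xi> * \<phi> \<xi>) = cmod (LINT \<tau>:{0..t}|lborel. S0sym \<eta> (t - \<tau>) \<xi> * nonlin u \<tau> \<xi>)"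
    by eventually_elim simp
  moreover have "cmod (nonlin u \<tau> \<xi>) \<le> \<bar>\<xi>\<bar> * (B\<^sup>2 / (4 * pi))" if "\<tau> \<in> {0..t}" for \<tau> \<xi>
  proof -
    have "cmod (nonlin u \<tau> \<xi>) \<le> \<bar>\<xi>\<bar> / (4 * pi) * (hs_norm 0 (u \<tau>))\<^sup>2"
      using norm_nonlin_le u[OF that] by blast
    also have "\<dots> \<le> \<bar>\<xi>\<bar> / (4 * pi) * B\<^sup>2"
      using u[OF that] by (intro mult_left_mono power_mono) auto
    finally show ?thesis by simp
  qed
  ultimately have "hs_norm 0 (\<lambda>\<xi>. u t \<xi> - S0sym \<eta> t \<xi> * \<phi> \<xi>) \<le> 4 * pi * (B\<^sup>2 / (4 * pi)) * duhamel_const \<eta> T"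
    by (intro duhamel_integral_hs_bound(2)[OF assms(1-3)]) auto
  then show ?thesis by (simp add: mult.commute)
qed

text \<open>A priori bound for small data, by the continuity method: as long as \<open>\<parallel>u\<parallel> \<le> 2a\<close>, Duhamel's
  formula gives \<open>\<parallel>u\<parallel> \<le> a + K (2a)\<^sup>2 < 2a\<close>.\<close>
lemma mild_solution_small_data_bound:
  assumes "\<eta> > 0" "T \<ge> 0" and u: "u \<in> CHs T 0" and mild: "mild_solution \<eta> T \<phi> u"
    and \<phi>: "hs_finite 0 \<phi>" and a: "exp (\<eta> * T / 4) * hs_norm 0 \<phi> \<le> a" "a > 0"
    and small: "4 * duhamel_const \<eta> T * a < 1" and t: "t \<in> {0..T}"
  shows "hs_norm 0 (u t) \<le> 2 * a"
proof (rule continuity_bootstrap[OF CHs_continuous_hs_norm[OF u] _ _ t])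
  have "1 * hs_norm 0 \<phi> \<le> exp (\<eta> * T / 4) * hs_norm 0 \<phi>"
    using assms(1,2) by (intro mult_right_mono) auto
  then show "hs_norm 0 (u 0) < 2 * a"
    using mild_solution_initial[OF mild assms(2) \<phi> CHs_hs_finite[OF u]] a assms(2) by simp
  fix t0 assume t0: "t0 \<in> {0..T}" and IH: "\<And>\<tau>. \<tau> \<in> {0..t0} \<Longrightarrow> hs_norm 0 (u \<tau>) \<le> 2 * a"
  have tt: "0 \<le> t0" "t0 \<le> T" using t0 by auto
  note S = hs_finite_S0sym_mult[OF assms(1) tt \<phi>]
  have ut0: "hs_finite 0 (u t0)" using CHs_hs_finite[OF u t0] .
  have D: "hs_norm 0 (\<lambda>\<xi>. u t0 \<xi> - S0sym \<eta> t0 \<xi> * \<phi> \<xi>) \<le> duhamel_const \<eta> T * (2 * a)\<^sup>2"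
    using IH CHs_hs_finite[OF u] tt by (intro mild_solution_duhamel_bound[OF assms(1) tt mild \<phi>]) auto
  have "hs_norm 0 (u t0) = hs_norm 0 (\<lambda>\<xi>. S0sym \<eta> t0 \<xi> * \<phi> \<xi> + (u t0 \<xi> - S0sym \<eta> t0 \<xi> * \<phi> \<xi>))"
    by simp
  also have "\<dots> \<le> hs_norm 0 (\<lambda>\<xi>. S0sym \<eta> t0 \<xi> * \<phi> \<xi>) + hs_norm 0 (\<lambda>\<xi>. u t0 \<xi> - S0sym \<eta> t0 \<xi> * \<phi> \<xi>)"
    by (rule hs_norm_triangle[OF S(1) hs_finite_diff[OF ut0 S(1)]])
  also have "\<dots> \<le> a + (4 * duhamel_const \<eta> T * a) * a"
    using S(2) D a(1) by (simp add: power2_eq_square algebra_simps)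
  also have "\<dots> < a + 1 * a"
    using small a(2) by (intro add_strict_left_mono mult_strict_right_mono)
  finally show "hs_norm 0 (u t0) < 2 * a" by simp
qed

definition free_evolution :: "real \<Rightarrow> (real \<Rightarrow> complex) \<Rightarrow> real \<Rightarrow> real \<Rightarrow> complex" where
  "free_evolution \<eta> h \<tau> \<xi> = S0sym \<eta> \<tau> \<xi> * h \<xi>"

text \<open>The quadratic term \<open>A\<^sub>2(t) = \<integral>\<^sub>0\<^sup>t S\<^sub>0(t - \<tau>) [v v\<^sub>x](\<tau>) d\<tau>\<close>, \<open>v = S\<^sub>0(\<cdot>) h\<close>, of the Picard
  expansion \<open>u = \<epsilon> S\<^sub>0(t) h - \<epsilon>\<^sup>2 A\<^sub>2(t) + O(\<epsilon>\<^sup>3)\<close> of the solution with data \<open>\<epsilon> h\<close>.\<close>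
definition second_iterate :: "real \<Rightarrow> (real \<Rightarrow> complex) \<Rightarrow> real \<Rightarrow> real \<Rightarrow> complex" where
  "second_iterate \<eta> h t \<xi> = (LINT \<tau>:{0..t}|lborel. S0sym \<eta> (t - \<tau>) \<xi> * nonlin (free_evolution \<eta> h) \<tau> \<xi>)"

lemma norm_nonlin_free_evolution_le:
  assumes "\<eta> > 0" "\<tau> \<in> {0..T}" "hs_finite 0 h"
  shows "cmod (nonlin (free_evolution \<eta> h) \<tau> \<xi>) \<le> \<bar>\<xi>\<bar> * ((exp (\<eta> * T / 4) * hs_norm 0 h)\<^sup>2 / (4 * pi))"
proof -
  have V: "hs_finite 0 (free_evolution \<eta> h \<tau>)"
    "hs_norm 0 (free_evolution \<eta> h \<tau>) \<le> exp (\<eta> * T / 4) * hs_norm 0 h"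
    using hs_finite_S0sym_mult[of \<eta> \<tau> T h] assms unfolding free_evolution_def[abs_def] by auto
  have "cmod (nonlin (free_evolution \<eta> h) \<tau> \<xi>) \<le> \<bar>\<xi>\<bar> / (4 * pi) * (hs_norm 0 (free_evolution \<eta> h \<tau>))\<^sup>2"
    by (rule norm_nonlin_le[where w = "free_evolution \<eta> h", OF V(1)])
  also have "\<dots> \<le> \<bar>\<xi>\<bar> / (4 * pi) * (exp (\<eta> * T / 4) * hs_norm 0 h)\<^sup>2"
    using V(2) assms by (intro mult_left_mono power_mono) auto
  finally show ?thesis by simp
qed

lemma second_iterate_measurable:
  assumes "hs_finite 0 h"
  shows "second_iterate \<eta> h t \<in> borel_measurable lborel"
proof -
  have [measurable]: "h \<in> borel_measurable borel" using hs_finite_measurable[OF assms] by simp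
  show ?thesis
    unfolding second_iterate_def[abs_def] free_evolution_def nonlin_def S0sym_def set_lebesgue_integral_def
    by measurable
qed

lemma set_integrable_second_iterate:
  assumes "\<eta> > 0" "0 \<le> t" "hs_finite 0 h"
  shows "set_integrable lborel {0..t} (\<lambda>\<tau>. S0sym \<eta> (t - \<tau>) \<xi> * nonlin (free_evolution \<eta> h) \<tau> \<xi>)"
  unfolding set_integrable_def
proof (rule Bochner_Integration.integrable_bound)
  define K where "K = exp (\<eta> * t / 4) * (\<bar>\<xi>\<bar> * ((exp (\<eta> * t / 4) * hs_norm 0 h)\<^sup>2 / (4 * pi)))"
  show "integrable lborel (\<lambda>\<tau>. indicator {0..t} \<tau> * K)"
    using borel_integrable_atLeastAtMost'[of 0 t "\<lambda>_. K"] by (simp add: set_integrable_def mult.commute)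
  have [measurable]: "h \<in> borel_measurable borel" using hs_finite_measurable[OF assms(3)] by simp
  show "(\<lambda>\<tau>. indicator {0..t} \<tau> *\<^sub>R (S0sym \<eta> (t - \<tau>) \<xi> * nonlin (free_evolution \<eta> h) \<tau> \<xi>))
      \<in> borel_measurable lborel"
    unfolding free_evolution_def nonlin_def S0sym_def by measurable
  have "cmod (S0sym \<eta> (t - \<tau>) \<xi> * nonlin (free_evolution \<eta> h) \<tau> \<xi>) \<le> K" if "\<tau> \<in> {0..t}" for \<tau>
    unfolding norm_mult K_def using that assms
    by (intro mult_mono norm_S0sym_le norm_nonlin_free_evolution_le) auto
  moreover have "K \<ge> 0" by (simp add: K_def)
  ultimately show "AE \<tau> in lborel. norm (indicator {0..t} \<tau> *\<^sub>R (S0sym \<eta> (t - \<tau>) \<xi> * nonlin (free_evolution \<eta> h) \<tau> \<xi>))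
      \<le> norm (indicator {0..t} \<tau> * K)"
    by (intro AE_I2) (simp add: indicator_def)
qed

lemma hs_finite_second_iterate:
  assumes "\<eta> > 0" "0 \<le> t" "hs_finite 0 h"
  shows "hs_finite 0 (second_iterate \<eta> h t)"
proof (rule duhamel_integral_hs_bound(1)[OF assms(1,2) order_refl _ second_iterate_measurable[OF assms(3)]])
  show "(exp (\<eta> * t / 4) * hs_norm 0 h)\<^sup>2 / (4 * pi) \<ge> 0" by simp
  show "AE \<xi> in lborel. set_integrable lborel {0..t} (\<lambda>\<tau>. S0sym \<eta> (t - \<tau>) \<xi> * nonlin (free_evolution \<eta> h) \<tau> \<xi>)
      \<and> cmod (second_iterate \<eta> h t \<xi>)
        = cmod (LINT \<tau>:{0..t}|lborel. S0sym \<eta> (t - \<tau>) \<xi> * nonlin (free_evolution \<eta> h) \<tau> \<xi>)"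
    by (simp add: second_iterate_def set_integrable_second_iterate[OF assms])
  show "cmod (nonlin (free_evolution \<eta> h) \<tau> \<xi>) \<le> \<bar>\<xi>\<bar> * ((exp (\<eta> * t / 4) * hs_norm 0 h)\<^sup>2 / (4 * pi))"
    if "\<tau> \<in> {0..t}" for \<tau> \<xi>
    by (rule norm_nonlin_free_evolution_le[OF assms(1) that assms(3)])
qed

text \<open>The remainder \<open>u - v + \<epsilon>\<^sup>2 A\<^sub>2\<close>, \<open>v = \<epsilon> S\<^sub>0(\<cdot>) h\<close>, solves the Duhamel formula with forcing
  \<open>nonlin u - nonlin v\<close>, because \<open>nonlin v = \<epsilon>\<^sup>2 nonlin (S\<^sub>0(\<cdot>) h)\<close>.\<close>
lemma second_order_remainder_duhamel:
  assumes "\<eta> > 0" and h: "hs_finite 0 h" and mild: "mild_solution \<eta> T (\<lambda>\<xi>. \<epsilon> *\<^sub>R h \<xi>) u"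
    and t: "t \<in> {0..T}"
  shows "AE \<xi> in lborel.
    set_integrable lborel {0..t} (\<lambda>\<tau>. S0sym \<eta> (t - \<tau>) \<xi>
      * (nonlin u \<tau> \<xi> - nonlin (\<lambda>\<tau> \<xi>. \<epsilon> *\<^sub>R free_evolution \<eta> h \<tau> \<xi>) \<tau> \<xi>))
    \<and> cmod (u t \<xi> - \<epsilon> *\<^sub>R free_evolution \<eta> h t \<xi> + \<epsilon>\<^sup>2 *\<^sub>R second_iterate \<eta> h t \<xi>)
      = cmod (LINT \<tau>:{0..t}|lborel. S0sym \<eta> (t - \<tau>) \<xi>
          * (nonlin u \<tau> \<xi> - nonlin (\<lambda>\<tau> \<xi>. \<epsilon> *\<^sub>R free_evolution \<eta> h \<tau> \<xi>) \<tau> \<xi>))"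
  using bspec[OF mild[unfolded mild_solution_def] t]
proof eventually_elim
  case (elim \<xi>)
  define v where "v = (\<lambda>\<tau> \<xi>. \<epsilon> *\<^sub>R free_evolution \<eta> h \<tau> \<xi>)"
  have nonlin_v: "nonlin v \<tau> \<xi> = \<epsilon>\<^sup>2 *\<^sub>R nonlin (free_evolution \<eta> h) \<tau> \<xi>" for \<tau>
    unfolding v_def by (rule nonlin_scaleR)
  have si_u: "set_integrable lborel {0..t} (\<lambda>\<tau>. S0sym \<eta> (t - \<tau>) \<xi> * nonlin u \<tau> \<xi>)"
    using elim by blast
  have si_v: "set_integrable lborel {0..t} (\<lambda>\<tau>. S0sym \<eta> (t - \<tau>) \<xi> * nonlin v \<tau> \<xi>)"
    unfolding nonlin_v using set_integrable_second_iterate[OF assms(1) _ h, of t \<xi>] t by simp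
  have "u t \<xi> - \<epsilon> *\<^sub>R free_evolution \<eta> h t \<xi> + \<epsilon>\<^sup>2 *\<^sub>R second_iterate \<eta> h t \<xi>
      = - ((LINT \<tau>:{0..t}|lborel. S0sym \<eta> (t - \<tau>) \<xi> * nonlin u \<tau> \<xi>)
           - (LINT \<tau>:{0..t}|lborel. S0sym \<eta> (t - \<tau>) \<xi> * nonlin v \<tau> \<xi>))"
    using elim unfolding nonlin_v second_iterate_def by (simp add: free_evolution_def)
  also have "\<dots> = - (LINT \<tau>:{0..t}|lborel. S0sym \<eta> (t - \<tau>) \<xi> * (nonlin u \<tau> \<xi> - nonlin v \<tau> \<xi>))"
    unfolding right_diff_distrib by (simp add: set_integral_diff(2)[OF si_u si_v])
  finally show ?case
    unfolding right_diff_distrib v_def[symmetric] using set_integral_diff(1)[OF si_u si_v]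
    by (simp only: norm_minus_cancel)
qed

text \<open>With \<open>v = \<epsilon> S\<^sub>0(\<cdot>) h\<close>, the first-order error \<open>u - v\<close> is \<open>O(\<epsilon>\<^sup>2)\<close>, so the forcing
  \<open>nonlin u - nonlin v\<close> of the remainder is \<open>O(\<epsilon>\<^sup>2) \<cdot> O(\<epsilon>)\<close>.\<close>
lemma mild_solution_second_order:
  assumes "\<eta> > 0" "T \<ge> 0" and u: "u \<in> CHs T 0" and mild: "mild_solution \<eta> T (\<lambda>\<xi>. \<epsilon> *\<^sub>R h \<xi>) u"
    and h: "hs_finite 0 h" and a: "exp (\<eta> * T / 4) * (\<bar>\<epsilon>\<bar> * hs_norm 0 h) \<le> a" "a > 0"
    and small: "4 * duhamel_const \<eta> T * a < 1" and t: "t \<in> {0..T}"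
  shows "hs_finite 0 (\<lambda>\<xi>. u t \<xi> - \<epsilon> *\<^sub>R free_evolution \<eta> h t \<xi> + \<epsilon>\<^sup>2 *\<^sub>R second_iterate \<eta> h t \<xi>)"
    "hs_norm 0 (\<lambda>\<xi>. u t \<xi> - \<epsilon> *\<^sub>R free_evolution \<eta> h t \<xi> + \<epsilon>\<^sup>2 *\<^sub>R second_iterate \<eta> h t \<xi>)
      \<le> duhamel_const \<eta> T * (duhamel_const \<eta> T * (2 * a)\<^sup>2 * (3 * a))"
proof -
  define K where "K = duhamel_const \<eta> T"
  define v where "v = (\<lambda>\<tau> \<xi>. \<epsilon> *\<^sub>R free_evolution \<eta> h \<tau> \<xi>)"
  have \<phi>: "hs_finite 0 (\<lambda>\<xi>. \<epsilon> *\<^sub>R h \<xi>)" "hs_norm 0 (\<lambda>\<xi>. \<epsilon> *\<^sub>R h \<xi>) = \<bar>\<epsilon>\<bar> * hs_norm 0 h"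
    using hs_finite_scaleR[OF h] by auto
  have v_eq: "S0sym \<eta> \<tau> \<xi> * (\<epsilon> *\<^sub>R h \<xi>) = v \<tau> \<xi>" for \<tau> \<xi>
    by (simp add: v_def free_evolution_def)
  have v_fun: "(\<lambda>\<xi>. S0sym \<eta> \<tau> \<xi> * (\<epsilon> *\<^sub>R h \<xi>)) = v \<tau>" for \<tau>
    by (simp add: v_def free_evolution_def fun_eq_iff)
  have u_fin: "hs_finite 0 (u \<tau>)" and u_le: "hs_norm 0 (u \<tau>) \<le> 2 * a" if "\<tau> \<in> {0..T}" for \<tau>
    using CHs_hs_finite[OF u that] mild_solution_small_data_bound[OF assms(1,2) u mild \<phi>(1) _ a(2) small that]
      a(1) \<phi>(2) by auto
  have v_fin: "hs_finite 0 (v \<tau>)" and v_le: "hs_norm 0 (v \<tau>) \<le> a" if "\<tau> \<in> {0..T}" for \<tau>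
    using hs_finite_S0sym_mult[OF assms(1) _ _ \<phi>(1), of \<tau> T, unfolded v_fun] that a(1) \<phi>(2) by auto
  have first: "hs_norm 0 (\<lambda>\<xi>. u \<tau> \<xi> - v \<tau> \<xi>) \<le> K * (2 * a)\<^sup>2" if "\<tau> \<in> {0..T}" for \<tau>
    using mild_solution_duhamel_bound[OF assms(1) _ _ mild \<phi>(1), of \<tau> "2 * a", unfolded v_eq]
      that u_fin u_le by (auto simp: K_def)
  have diff_le: "cmod (nonlin u \<tau> \<xi> - nonlin v \<tau> \<xi>) \<le> \<bar>\<xi>\<bar> * (K * (2 * a)\<^sup>2 * (3 * a) / (4 * pi))"
    if "\<tau> \<in> {0..t}" for \<tau> \<xi>
  proof -
    have \<tau>: "\<tau> \<in> {0..T}" using that t by auto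
    have "cmod (nonlin u \<tau> \<xi> - nonlin v \<tau> \<xi>)
        \<le> \<bar>\<xi>\<bar> / (4 * pi) * (hs_norm 0 (\<lambda>\<zeta>. u \<tau> \<zeta> - v \<tau> \<zeta>) * (hs_norm 0 (u \<tau>) + hs_norm 0 (v \<tau>)))"
      by (rule norm_nonlin_diff_le[where u = u and v = v, OF u_fin[OF \<tau>] v_fin[OF \<tau>]])
    also have "\<dots> \<le> \<bar>\<xi>\<bar> / (4 * pi) * (K * (2 * a)\<^sup>2 * (2 * a + a))"
      using first[OF \<tau>] u_le[OF \<tau>] v_le[OF \<tau>] a(2) duhamel_const_nonneg[of \<eta> T]
      by (intro mult_left_mono mult_mono add_mono) (auto simp: K_def)
    finally show ?thesis by (simp add: mult_ac)
  qed
  have [measurable]: "u t \<in> borel_measurable lborel" "h \<in> borel_measurable lborel"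
    "second_iterate \<eta> h t \<in> borel_measurable lborel"
    using hs_finite_measurable[OF u_fin[OF t]] hs_finite_measurable[OF h] second_iterate_measurable[OF h]
    by auto
  note bound = duhamel_integral_hs_bound[OF assms(1) _ _ _ _
      second_order_remainder_duhamel[OF assms(1) h mild t, folded v_def] diff_le]
  show "hs_finite 0 (\<lambda>\<xi>. u t \<xi> - \<epsilon> *\<^sub>R free_evolution \<eta> h t \<xi> + \<epsilon>\<^sup>2 *\<^sub>R second_iterate \<eta> h t \<xi>)"
    using t a(2) duhamel_const_nonneg[of \<eta> T] by (intro bound(1)) (auto simp: K_def free_evolution_def)
  have "hs_norm 0 (\<lambda>\<xi>. u t \<xi> - \<epsilon> *\<^sub>R free_evolution \<eta> h t \<xi> + \<epsilon>\<^sup>2 *\<^sub>R second_iterate \<eta> h t \<xi>)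
      \<le> 4 * pi * (K * (2 * a)\<^sup>2 * (3 * a) / (4 * pi)) * duhamel_const \<eta> T"
    using t a(2) duhamel_const_nonneg[of \<eta> T] by (intro bound(2)) (auto simp: K_def free_evolution_def)
  then show "hs_norm 0 (\<lambda>\<xi>. u t \<xi> - \<epsilon> *\<^sub>R free_evolution \<eta> h t \<xi> + \<epsilon>\<^sup>2 *\<^sub>R second_iterate \<eta> h t \<xi>)
      \<le> K * (K * (2 * a)\<^sup>2 * (3 * a))"
    by (simp add: K_def mult_ac)
qed

lemma mild_solution_second_order_pairing:
  assumes "\<eta> > 0" "T \<ge> 0" "u \<in> CHs T 0" "mild_solution \<eta> T (\<lambda>\<xi>. \<epsilon> *\<^sub>R h \<xi>) u"
    and h: "hs_finite 0 h" and "exp (\<eta> * T / 4) * (\<bar>\<epsilon>\<bar> * hs_norm 0 h) \<le> a" "a > 0"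
    and "4 * duhamel_const \<eta> T * a < 1" and t: "t \<in> {0..T}"
    and s: "s \<le> 0" and us: "u \<in> CHs T s" and \<psi>: "hs_finite s \<psi>"
  shows "\<bar>hs_inner s (u t) \<psi> - \<epsilon> * hs_inner s (free_evolution \<eta> h t) \<psi>
      - \<epsilon>\<^sup>2 * - hs_inner s (second_iterate \<eta> h t) \<psi>\<bar>
    \<le> duhamel_const \<eta> T * (duhamel_const \<eta> T * (2 * a)\<^sup>2 * (3 * a)) * hs_norm s \<psi>"
proof -
  define c where "c = (\<lambda>\<xi>. u t \<xi> - \<epsilon> *\<^sub>R free_evolution \<eta> h t \<xi> + \<epsilon>\<^sup>2 *\<^sub>R second_iterate \<eta> h t \<xi>)"
  note second = mild_solution_second_order[OF assms(1-9), folded c_def]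
  have V: "hs_finite s (free_evolution \<eta> h t)"
    using hs_finite_S0sym_mult(1)[OF assms(1) _ _ h, of t T] t hs_finite_weaker(1)[OF _ s]
    by (auto simp: free_evolution_def[abs_def])
  have Q: "hs_finite s (second_iterate \<eta> h t)"
    using hs_finite_second_iterate[OF assms(1) _ h, of t] t hs_finite_weaker(1)[OF _ s] by auto
  have "hs_inner s c \<psi> = hs_inner s (u t) \<psi> - \<epsilon> * hs_inner s (free_evolution \<eta> h t) \<psi>
      + \<epsilon>\<^sup>2 * hs_inner s (second_iterate \<eta> h t) \<psi>"
    unfolding c_def using CHs_hs_finite[OF us t] V Q \<psi>
    by (simp add: hs_inner_add hs_inner_diff hs_finite_diff hs_finite_scaleR hs_inner_scaleR)
  moreover have "\<bar>hs_inner s c \<psi>\<bar> \<le> hs_norm s c * hs_norm s \<psi>"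
    by (rule hs_inner_abs_le[OF hs_finite_weaker(1)[OF second(1) s] \<psi>])
  moreover have "hs_norm s c * hs_norm s \<psi>
      \<le> duhamel_const \<eta> T * (duhamel_const \<eta> T * (2 * a)\<^sup>2 * (3 * a)) * hs_norm s \<psi>"
    using hs_finite_weaker(2)[OF second(1) s] second(2) by (intro mult_right_mono) auto
  ultimately show ?thesis by simp
qed

section \<open>Expansions of real functions\<close>

lemma quadratic_o_imp_zero:
  fixes A B :: real
  assumes small: "\<And>e. e > 0 \<Longrightarrow> \<exists>\<epsilon>0>0. \<forall>\<epsilon>. 0 < \<epsilon> \<and> \<epsilon> < \<epsilon>0 \<longrightarrow> \<bar>\<epsilon> * A + \<epsilon>\<^sup>2 * B\<bar> \<le> e * \<epsilon>\<^sup>2"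
  shows "A = 0" "B = 0"
proof -
  have linear: "\<bar>A + \<epsilon> * B\<bar> \<le> e * \<epsilon>" if "0 < \<epsilon>" "\<bar>\<epsilon> * A + \<epsilon>\<^sup>2 * B\<bar> \<le> e * \<epsilon>\<^sup>2" for e \<epsilon>
  proof -
    have "\<epsilon> * \<bar>A + \<epsilon> * B\<bar> = \<bar>\<epsilon> * (A + \<epsilon> * B)\<bar>" using that(1) by (simp add: abs_mult)
    also have "\<dots> = \<bar>\<epsilon> * A + \<epsilon>\<^sup>2 * B\<bar>" by (simp add: power2_eq_square algebra_simps)
    also have "\<dots> \<le> \<epsilon> * (e * \<epsilon>)" using that(2) by (simp add: power2_eq_square mult_ac)
    finally show ?thesis using that(1) by simp
  qed
  show A: "A = 0"
  proof (rule ccontr)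
    assume "A \<noteq> 0"
    obtain \<epsilon>0 where \<epsilon>0: "\<epsilon>0 > 0" "\<forall>\<epsilon>. 0 < \<epsilon> \<and> \<epsilon> < \<epsilon>0 \<longrightarrow> \<bar>\<epsilon> * A + \<epsilon>\<^sup>2 * B\<bar> \<le> 1 * \<epsilon>\<^sup>2"
      using small[of 1] by auto
    define \<epsilon> where "\<epsilon> = min (\<epsilon>0 / 2) (\<bar>A\<bar> / (2 * (1 + \<bar>B\<bar>)))"
    have \<epsilon>: "0 < \<epsilon>" "\<epsilon> < \<epsilon>0" "\<epsilon> * (1 + \<bar>B\<bar>) \<le> \<bar>A\<bar> / 2"
      using \<epsilon>0(1) \<open>A \<noteq> 0\<close> by (auto simp: \<epsilon>_def min_def field_simps add_pos_nonneg)
    have "\<bar>A + \<epsilon> * B\<bar> \<le> \<epsilon>" using linear[of \<epsilon> 1] \<epsilon> \<epsilon>0(2) by simp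
    then have "\<bar>A\<bar> \<le> \<epsilon> * (1 + \<bar>B\<bar>)"
      using abs_triangle_ineq4[of "A + \<epsilon> * B" "\<epsilon> * B"] \<epsilon>(1) by (simp add: abs_mult algebra_simps)
    then show False using \<epsilon>(3) \<open>A \<noteq> 0\<close> by simp
  qed
  show "B = 0"
  proof (rule ccontr)
    assume "B \<noteq> 0"
    then obtain \<epsilon>0 where \<epsilon>0: "\<epsilon>0 > 0"
      "\<forall>\<epsilon>. 0 < \<epsilon> \<and> \<epsilon> < \<epsilon>0 \<longrightarrow> \<bar>\<epsilon> * A + \<epsilon>\<^sup>2 * B\<bar> \<le> \<bar>B\<bar> / 2 * \<epsilon>\<^sup>2"
      using small[of "\<bar>B\<bar> / 2"] by auto
    have "\<bar>\<epsilon>0 / 2 * A + (\<epsilon>0 / 2)\<^sup>2 * B\<bar> \<le> \<bar>B\<bar> / 2 * (\<epsilon>0 / 2)\<^sup>2"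
      using \<epsilon>0(2)[rule_format, of "\<epsilon>0 / 2"] \<epsilon>0(1) by linarith
    then have "\<bar>A + \<epsilon>0 / 2 * B\<bar> \<le> \<bar>B\<bar> / 2 * (\<epsilon>0 / 2)"
      using \<epsilon>0(1) by (intro linear) auto
    then show False using A \<open>B \<noteq> 0\<close> \<epsilon>0(1) by (simp add: abs_mult field_simps)
  qed
qed

lemma expansion_coefficients_unique:
  fixes f :: "real \<Rightarrow> real"
  assumes o: "\<And>e. e > 0 \<Longrightarrow> \<exists>\<epsilon>0>0. \<forall>\<epsilon>. 0 < \<epsilon> \<and> \<epsilon> < \<epsilon>0 \<longrightarrow> \<bar>f \<epsilon> - \<epsilon> * a - \<epsilon>\<^sup>2 * b\<bar> \<le> e * \<epsilon>\<^sup>2"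
    and O: "\<exists>\<epsilon>0>0. \<exists>C. \<forall>\<epsilon>. 0 < \<epsilon> \<and> \<epsilon> < \<epsilon>0 \<longrightarrow> \<bar>f \<epsilon> - \<epsilon> * c - \<epsilon>\<^sup>2 * d\<bar> \<le> C * \<epsilon> ^ 3"
  shows "b = d"
proof -
  obtain \<epsilon>2 C where \<epsilon>2: "\<epsilon>2 > 0" and C: "\<forall>\<epsilon>. 0 < \<epsilon> \<and> \<epsilon> < \<epsilon>2 \<longrightarrow> \<bar>f \<epsilon> - \<epsilon> * c - \<epsilon>\<^sup>2 * d\<bar> \<le> C * \<epsilon> ^ 3"
    using O by blast
  have "b - d = 0"
  proof (rule quadratic_o_imp_zero(2))
    fix e :: real assume e: "e > 0"
    obtain \<epsilon>1 where \<epsilon>1: "\<epsilon>1 > 0"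
      and o1: "\<forall>\<epsilon>. 0 < \<epsilon> \<and> \<epsilon> < \<epsilon>1 \<longrightarrow> \<bar>f \<epsilon> - \<epsilon> * a - \<epsilon>\<^sup>2 * b\<bar> \<le> e / 2 * \<epsilon>\<^sup>2"
      using o[of "e / 2"] e by auto
    define \<epsilon>0 where "\<epsilon>0 = min (min \<epsilon>1 \<epsilon>2) (e / (2 * (\<bar>C\<bar> + 1)))"
    show "\<exists>\<epsilon>0>0. \<forall>\<epsilon>. 0 < \<epsilon> \<and> \<epsilon> < \<epsilon>0 \<longrightarrow> \<bar>\<epsilon> * (a - c) + \<epsilon>\<^sup>2 * (b - d)\<bar> \<le> e * \<epsilon>\<^sup>2"
    proof (intro exI[of _ \<epsilon>0] conjI allI impI)
      show "\<epsilon>0 > 0" using \<epsilon>1 \<epsilon>2 e by (simp add: \<epsilon>0_def add_nonneg_pos)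
      fix \<epsilon> :: real assume \<epsilon>: "0 < \<epsilon> \<and> \<epsilon> < \<epsilon>0"
      then have \<epsilon>_lt: "0 < \<epsilon>" "\<epsilon> < \<epsilon>1" "\<epsilon> < \<epsilon>2" "\<epsilon> < e / (2 * (\<bar>C\<bar> + 1))"
        by (auto simp: \<epsilon>0_def)
      have "C * \<epsilon> \<le> \<bar>C\<bar> * \<epsilon>" using \<epsilon>_lt by (intro mult_right_mono) auto
      also have "\<dots> \<le> \<bar>C\<bar> * (e / (2 * (\<bar>C\<bar> + 1)))" using \<epsilon>_lt by (intro mult_left_mono) auto
      also have "\<dots> = e / 2 * (\<bar>C\<bar> / (\<bar>C\<bar> + 1))" by (simp add: field_simps)
      also have "\<dots> \<le> e / 2 * 1" using e by (intro mult_left_mono) auto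
      finally have C\<epsilon>: "(C * \<epsilon>) * \<epsilon>\<^sup>2 \<le> (e / 2) * \<epsilon>\<^sup>2" by (intro mult_right_mono) auto
      have "\<bar>f \<epsilon> - \<epsilon> * c - \<epsilon>\<^sup>2 * d\<bar> \<le> C * \<epsilon> ^ 3" using C \<epsilon>_lt by simp
      also have "C * \<epsilon> ^ 3 = (C * \<epsilon>) * \<epsilon>\<^sup>2" by (simp add: power2_eq_square power3_eq_cube)
      finally have "\<bar>f \<epsilon> - \<epsilon> * c - \<epsilon>\<^sup>2 * d\<bar> \<le> e / 2 * \<epsilon>\<^sup>2" using C\<epsilon> by linarith
      moreover have "\<bar>f \<epsilon> - \<epsilon> * a - \<epsilon>\<^sup>2 * b\<bar> \<le> e / 2 * \<epsilon>\<^sup>2" using o1 \<epsilon>_lt by simp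
      moreover have "\<epsilon> * (a - c) + \<epsilon>\<^sup>2 * (b - d) = (f \<epsilon> - \<epsilon> * c - \<epsilon>\<^sup>2 * d) - (f \<epsilon> - \<epsilon> * a - \<epsilon>\<^sup>2 * b)"
        by (simp add: algebra_simps)
      ultimately show "\<bar>\<epsilon> * (a - c) + \<epsilon>\<^sup>2 * (b - d)\<bar> \<le> e * \<epsilon>\<^sup>2"
        using abs_triangle_ineq4[of "f \<epsilon> - \<epsilon> * c - \<epsilon>\<^sup>2 * d" "f \<epsilon> - \<epsilon> * a - \<epsilon>\<^sup>2 * b"] by linarith
    qed
  qed
  then show ?thesis by simp
qed

lemma second_order_expansion_from_derivative:
  fixes f g :: "real \<Rightarrow> real"
  assumes "\<rho> > 0" and deriv: "\<And>x. \<bar>x\<bar> < \<rho> \<Longrightarrow> (f has_real_derivative g x) (at x)"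
    and g: "\<And>e. e > 0 \<Longrightarrow> \<exists>\<delta>>0. \<forall>x. \<bar>x\<bar> < \<delta> \<longrightarrow> \<bar>g x - a - x * b\<bar> \<le> e * \<bar>x\<bar>"
    and "e > 0"
  shows "\<exists>\<epsilon>0>0. \<forall>\<epsilon>. 0 < \<epsilon> \<and> \<epsilon> < \<epsilon>0 \<longrightarrow> \<bar>f \<epsilon> - f 0 - \<epsilon> * a - \<epsilon>\<^sup>2 * (b / 2)\<bar> \<le> e * \<epsilon>\<^sup>2"
proof -
  obtain \<delta> where \<delta>: "\<delta> > 0" "\<forall>x. \<bar>x\<bar> < \<delta> \<longrightarrow> \<bar>g x - a - x * b\<bar> \<le> e * \<bar>x\<bar>"
    using g[OF \<open>e > 0\<close>] by blast
  show ?thesis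
  proof (intro exI[of _ "min \<delta> \<rho>"] conjI allI impI)
    show "min \<delta> \<rho> > 0" using \<delta>(1) \<open>\<rho> > 0\<close> by simp
    fix \<epsilon> :: real assume \<epsilon>: "0 < \<epsilon> \<and> \<epsilon> < min \<delta> \<rho>"
    define G where "G z = f z - z * a - z\<^sup>2 * (b / 2)" for z
    have "(G has_real_derivative g z - a - z * b) (at z)" if "0 \<le> z" "z \<le> \<epsilon>" for z
      unfolding G_def using that \<epsilon> by (auto intro!: derivative_eq_intros deriv)
    then obtain z where z: "0 < z" "z < \<epsilon>" and mvt: "G \<epsilon> - G 0 = (\<epsilon> - 0) * (g z - a - z * b)"
      using MVT2[of 0 \<epsilon> G "\<lambda>z. g z - a - z * b"] \<epsilon> by auto
    have "\<bar>g z - a - z * b\<bar> \<le> e * \<bar>z\<bar>" using \<delta>(2)[rule_format, of z] z \<epsilon> by simp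
    also have "\<dots> \<le> e * \<epsilon>" using z \<open>e > 0\<close> by (intro mult_left_mono) auto
    finally have "\<bar>g z - a - z * b\<bar> \<le> e * \<epsilon>" .
    then have "\<bar>G \<epsilon> - G 0\<bar> \<le> \<epsilon> * (e * \<epsilon>)" using mvt \<epsilon> by (simp add: abs_mult mult_left_mono)
    then show "\<bar>f \<epsilon> - f 0 - \<epsilon> * a - \<epsilon>\<^sup>2 * (b / 2)\<bar> \<le> e * \<epsilon>\<^sup>2"
      by (simp add: G_def power2_eq_square algebra_simps)
  qed
qed

lemma has_real_derivative_epsilon_delta:
  fixes f :: "real \<Rightarrow> real"
  assumes "\<And>e. e > 0 \<Longrightarrow> \<exists>d>0. \<forall>y. \<bar>y - x\<bar> < d \<longrightarrow> \<bar>f y - f x - (y - x) * D\<bar> \<le> e * \<bar>y - x\<bar>"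
  shows "(f has_real_derivative D) (at x)"
  unfolding has_field_derivative_def has_derivative_within_alt
  using assms by (auto simp: bounded_linear_mult_right mult.commute)

lemma abs_mult_less_of_less_divide: "0 \<le> c \<Longrightarrow> \<bar>u\<bar> < D / (c + 1) \<Longrightarrow> \<bar>u\<bar> * (c :: real) < D"
  by (smt (verit, best) mult_left_mono pos_less_divide_eq abs_ge_zero)

lemma abs_mult_less_of_near:
  fixes x y c r :: real
  assumes "\<bar>y - x\<bar> < (r - \<bar>x\<bar> * c) / (c + 1)" "\<bar>x\<bar> * c < r" "0 \<le> c"
  shows "\<bar>y\<bar> * c < r"
proof -
  have "\<bar>y - x\<bar> * c < r - \<bar>x\<bar> * c" using abs_mult_less_of_less_divide assms(1,3) by blast
  moreover have "\<bar>y\<bar> * c \<le> \<bar>x\<bar> * c + \<bar>y - x\<bar> * c"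
    using abs_triangle_ineq[of x "y - x"] assms(3) by (simp add: mult_right_mono flip: distrib_right)
  ultimately show ?thesis by linarith
qed

section \<open>Twice Fr\'echet differentiable flows\<close>

lemma hs_inner_scaleR_of_linear:
  fixes A :: "(real \<Rightarrow> complex) \<Rightarrow> real \<Rightarrow> real \<Rightarrow> complex" and h :: "real \<Rightarrow> complex"
  assumes "A (\<lambda>\<zeta>. c *\<^sub>R h \<zeta>) \<in> CHs T s" "A h \<in> CHs T s" "t \<in> {0..T}" "hs_finite s \<psi>"
    and "chs_norm T s (\<lambda>t \<xi>. A (\<lambda>\<zeta>. c *\<^sub>R h \<zeta> + 0 *\<^sub>R h \<zeta>) t \<xi> - (c *\<^sub>R A h t \<xi> + 0 *\<^sub>R A h t \<xi>)) = 0"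
  shows "hs_inner s (A (\<lambda>\<zeta>. c *\<^sub>R h \<zeta>) t) \<psi> = c * hs_inner s (A h t) \<psi>"
proof -
  have "(\<lambda>\<zeta>. c *\<^sub>R h \<zeta> + 0 *\<^sub>R h \<zeta>) = (\<lambda>\<zeta>. c *\<^sub>R h \<zeta>)" by simp
  then show ?thesis using hs_inner_combination_eq[OF assms(1,2,2,3,4), of c 0] assms(5) by simp
qed

lemma frechet_pairing_remainder:
  assumes fr: "frechet_deriv_at s T F \<phi> L" and t: "t \<in> {0..T}" and \<psi>: "hs_finite s \<psi>" and e: "e > 0"
    and F\<phi>: "F \<phi> \<in> CHs T s"
  obtains \<delta> where "\<delta> > 0" "\<And>k. k \<in> Hs s \<Longrightarrow> hs_norm s k < \<delta> \<Longrightarrow> F (\<lambda>\<zeta>. \<phi> \<zeta> + k \<zeta>) \<in> CHs T s \<Longrightarrow>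
    \<bar>hs_inner s (F (\<lambda>\<zeta>. \<phi> \<zeta> + k \<zeta>) t) \<psi> - hs_inner s (F \<phi> t) \<psi> - hs_inner s (L k t) \<psi>\<bar> \<le> e * hs_norm s k"
proof -
  define K where "K = hs_norm s \<psi> + 1"
  have K: "K > 0" by (simp add: K_def add_nonneg_pos)
  have "e / K > 0" using e K by simp
  then obtain \<delta> where \<delta>: "\<delta> > 0" and approx: "\<forall>k\<in>Hs s. hs_norm s k < \<delta> \<longrightarrow>
      chs_norm T s (\<lambda>t \<xi>. F (\<lambda>\<zeta>. \<phi> \<zeta> + k \<zeta>) t \<xi> - F \<phi> t \<xi> - L k t \<xi>) \<le> e / K * hs_norm s k"
    using fr unfolding frechet_deriv_at_def by blast
  have L_CHs: "\<And>g. g \<in> Hs s \<Longrightarrow> L g \<in> CHs T s"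
    using fr unfolding frechet_deriv_at_def bdd_lin_op_def by blast
  show ?thesis
  proof (rule that[OF \<delta>])
    fix k assume k: "k \<in> Hs s" "hs_norm s k < \<delta>" and Fk: "F (\<lambda>\<zeta>. \<phi> \<zeta> + k \<zeta>) \<in> CHs T s"
    have "\<bar>hs_inner s (F (\<lambda>\<zeta>. \<phi> \<zeta> + k \<zeta>) t) \<psi> - hs_inner s (F \<phi> t) \<psi> - hs_inner s (L k t) \<psi>\<bar>
        \<le> e / K * hs_norm s k * hs_norm s \<psi>"
      using approx k by (intro hs_inner_diff3_bound[OF Fk F\<phi> L_CHs[OF k(1)] t \<psi>]) blast
    also have "\<dots> \<le> e * hs_norm s k"
      using e K by (simp add: K_def field_simps mult_left_mono)
    finally show "\<bar>hs_inner s (F (\<lambda>\<zeta>. \<phi> \<zeta> + k \<zeta>) t) \<psi> - hs_inner s (F \<phi> t) \<psi> - hs_inner s (L k t) \<psi>\<bar>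
        \<le> e * hs_norm s k" .
  qed
qed

lemma bdd_lin_op_hs_inner_scaleR:
  assumes L: "bdd_lin_op s T L" and "h \<in> Hs s" "t \<in> {0..T}" "hs_finite s \<psi>"
  shows "hs_inner s (L (\<lambda>\<zeta>. c *\<^sub>R h \<zeta>) t) \<psi> = c * hs_inner s (L h t) \<psi>"
proof (rule hs_inner_scaleR_of_linear)
  show "L (\<lambda>\<zeta>. c *\<^sub>R h \<zeta>) \<in> CHs T s" "L h \<in> CHs T s"
    using L assms(2) Hs_scaleR unfolding bdd_lin_op_def by blast+
  show "chs_norm T s (\<lambda>t \<xi>. L (\<lambda>\<zeta>. c *\<^sub>R h \<zeta> + 0 *\<^sub>R h \<zeta>) t \<xi> - (c *\<^sub>R L h t \<xi> + 0 *\<^sub>R L h t \<xi>)) = 0"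
    using L assms(2) unfolding bdd_lin_op_def by blast
qed (use assms in auto)

context
  fixes s T r :: real and F :: "(real \<Rightarrow> complex) \<Rightarrow> real \<Rightarrow> real \<Rightarrow> complex"
    and DF D2 :: "(real \<Rightarrow> complex) \<Rightarrow> (real \<Rightarrow> complex) \<Rightarrow> real \<Rightarrow> real \<Rightarrow> complex"
    and h \<psi> :: "real \<Rightarrow> complex" and t :: real
  assumes r: "r > 0"
    and F_CHs: "\<And>\<phi>. \<phi> \<in> Hs s \<Longrightarrow> hs_norm s \<phi> < r \<Longrightarrow> F \<phi> \<in> CHs T s"
    and DF: "\<And>\<phi>. \<phi> \<in> Hs s \<Longrightarrow> hs_norm s \<phi> < r \<Longrightarrow> frechet_deriv_at s T F \<phi> (DF \<phi>)"
    and D2_bdd: "\<And>k. k \<in> Hs s \<Longrightarrow> bdd_lin_op s T (D2 k)"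
    and D2_lin: "\<forall>k\<in>Hs s. \<forall>k'\<in>Hs s. \<forall>g\<in>Hs s. \<forall>a b :: real.
           chs_norm T s (\<lambda>t \<xi>. D2 (\<lambda>\<zeta>. a *\<^sub>R k \<zeta> + b *\<^sub>R k' \<zeta>) g t \<xi>
                                 - (a *\<^sub>R D2 k g t \<xi> + b *\<^sub>R D2 k' g t \<xi>)) = 0"
    and D2_approx: "\<forall>\<epsilon>>0. \<exists>\<delta>>0. \<forall>k\<in>Hs s. hs_norm s k < \<delta> \<longrightarrow>
           (\<forall>g\<in>Hs s. chs_norm T s (\<lambda>t \<xi>. DF k g t \<xi> - DF (\<lambda>_. 0) g t \<xi> - D2 k g t \<xi>)
                        \<le> \<epsilon> * hs_norm s k * hs_norm s g)"
    and h: "h \<in> Hs s" and t: "t \<in> {0..T}" and \<psi>: "hs_finite s \<psi>"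
begin

lemma hs_norm_scaled_direction: "hs_norm s (\<lambda>\<zeta>. x *\<^sub>R h \<zeta>) = \<bar>x\<bar> * hs_norm s h"
  using hs_finite_scaleR(2)[OF Hs_imp_hs_finite[OF h]] .

lemma DF_CHs: "\<phi> \<in> Hs s \<Longrightarrow> hs_norm s \<phi> < r \<Longrightarrow> g \<in> Hs s \<Longrightarrow> DF \<phi> g \<in> CHs T s"
  using DF unfolding frechet_deriv_at_def bdd_lin_op_def by blast

lemma pairing_has_derivative:
  assumes x: "\<bar>x\<bar> * hs_norm s h < r"
  shows "((\<lambda>x. hs_inner s (F (\<lambda>\<zeta>. x *\<^sub>R h \<zeta>) t) \<psi>)
           has_real_derivative hs_inner s (DF (\<lambda>\<zeta>. x *\<^sub>R h \<zeta>) h t) \<psi>) (at x)"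
proof (rule has_real_derivative_epsilon_delta)
  fix e :: real assume e: "e > 0"
  define L where "L = DF (\<lambda>\<zeta>. x *\<^sub>R h \<zeta>)"
  have F_CHs': "F (\<lambda>\<zeta>. z *\<^sub>R h \<zeta>) \<in> CHs T s" if "\<bar>z\<bar> * hs_norm s h < r" for z
    using F_CHs[OF Hs_scaleR[OF h]] that by (simp add: hs_norm_scaled_direction)
  have fr: "frechet_deriv_at s T F (\<lambda>\<zeta>. x *\<^sub>R h \<zeta>) L"
    unfolding L_def using DF Hs_scaleR[OF h] x by (simp add: hs_norm_scaled_direction)
  then have L: "bdd_lin_op s T L" unfolding frechet_deriv_at_def by blast
  have "e / (hs_norm s h + 1) > 0" using e by (simp add: add_nonneg_pos)
  from frechet_pairing_remainder[OF fr t \<psi> this F_CHs'[OF x]]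
  obtain \<delta> where \<delta>: "\<delta> > 0" and remainder: "\<And>k. k \<in> Hs s \<Longrightarrow> hs_norm s k < \<delta> \<Longrightarrow>
      F (\<lambda>\<zeta>. x *\<^sub>R h \<zeta> + k \<zeta>) \<in> CHs T s \<Longrightarrow>
      \<bar>hs_inner s (F (\<lambda>\<zeta>. x *\<^sub>R h \<zeta> + k \<zeta>) t) \<psi> - hs_inner s (F (\<lambda>\<zeta>. x *\<^sub>R h \<zeta>) t) \<psi>
        - hs_inner s (L k t) \<psi>\<bar> \<le> e / (hs_norm s h + 1) * hs_norm s k"
    by blast
  define d where "d = min (\<delta> / (hs_norm s h + 1)) ((r - \<bar>x\<bar> * hs_norm s h) / (hs_norm s h + 1))"
  show "\<exists>d>0. \<forall>y. \<bar>y - x\<bar> < d \<longrightarrow> \<bar>hs_inner s (F (\<lambda>\<zeta>. y *\<^sub>R h \<zeta>) t) \<psi> - hs_inner s (F (\<lambda>\<zeta>. x *\<^sub>R h \<zeta>) t) \<psi>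
      - (y - x) * hs_inner s (DF (\<lambda>\<zeta>. x *\<^sub>R h \<zeta>) h t) \<psi>\<bar> \<le> e * \<bar>y - x\<bar>"
  proof (intro exI[of _ d] conjI allI impI)
    show "d > 0" unfolding d_def using \<delta> x by (simp add: add_nonneg_pos)
    fix y assume y: "\<bar>y - x\<bar> < d"
    define k where "k = (\<lambda>\<zeta>. (y - x) *\<^sub>R h \<zeta>)"
    have k: "k \<in> Hs s" "hs_norm s k = \<bar>y - x\<bar> * hs_norm s h" "hs_norm s k < \<delta>"
      using y Hs_scaleR[OF h] hs_norm_scaled_direction abs_mult_less_of_less_divide[of "hs_norm s h" "y - x" \<delta>]
      by (auto simp: k_def d_def)
    have xk: "(\<lambda>\<zeta>. x *\<^sub>R h \<zeta> + k \<zeta>) = (\<lambda>\<zeta>. y *\<^sub>R h \<zeta>)"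
      unfolding k_def by (simp add: algebra_simps)
    have "F (\<lambda>\<zeta>. x *\<^sub>R h \<zeta> + k \<zeta>) \<in> CHs T s"
      unfolding xk using y abs_mult_less_of_near[OF _ x] by (intro F_CHs') (simp add: d_def)
    from remainder[OF k(1,3) this]
    have "\<bar>hs_inner s (F (\<lambda>\<zeta>. y *\<^sub>R h \<zeta>) t) \<psi> - hs_inner s (F (\<lambda>\<zeta>. x *\<^sub>R h \<zeta>) t) \<psi>
        - hs_inner s (L k t) \<psi>\<bar> \<le> e / (hs_norm s h + 1) * hs_norm s k"
      unfolding xk .
    moreover have "hs_inner s (L k t) \<psi> = (y - x) * hs_inner s (L h t) \<psi>"
      unfolding k_def by (rule bdd_lin_op_hs_inner_scaleR[OF L h t \<psi>])
    moreover have "e / (hs_norm s h + 1) * hs_norm s k \<le> e * \<bar>y - x\<bar>"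
    proof -
      have "e / (hs_norm s h + 1) * hs_norm s k = e * \<bar>y - x\<bar> * (hs_norm s h / (hs_norm s h + 1))"
        using k(2) by (simp add: field_simps)
      also have "\<dots> \<le> e * \<bar>y - x\<bar> * 1" using e by (intro mult_left_mono) (auto simp: add_nonneg_pos)
      finally show ?thesis by simp
    qed
    ultimately show "\<bar>hs_inner s (F (\<lambda>\<zeta>. y *\<^sub>R h \<zeta>) t) \<psi> - hs_inner s (F (\<lambda>\<zeta>. x *\<^sub>R h \<zeta>) t) \<psi>
      - (y - x) * hs_inner s (DF (\<lambda>\<zeta>. x *\<^sub>R h \<zeta>) h t) \<psi>\<bar> \<le> e * \<bar>y - x\<bar>"
      unfolding L_def by simp
  qed
qed

lemma pairing_derivative_expansion:
  assumes e: "e > 0"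
  shows "\<exists>\<delta>>0. \<forall>x. \<bar>x\<bar> < \<delta> \<longrightarrow>
    \<bar>hs_inner s (DF (\<lambda>\<zeta>. x *\<^sub>R h \<zeta>) h t) \<psi> - hs_inner s (DF (\<lambda>_. 0) h t) \<psi>
      - x * hs_inner s (D2 h h t) \<psi>\<bar> \<le> e * \<bar>x\<bar>"
proof -
  define K where "K = (hs_norm s h)\<^sup>2 * hs_norm s \<psi> + 1"
  have K: "K > 0" unfolding K_def by (simp add: add_nonneg_pos)
  obtain \<delta>0 where \<delta>0: "\<delta>0 > 0" and approx: "\<forall>k\<in>Hs s. hs_norm s k < \<delta>0 \<longrightarrow>
      (\<forall>g\<in>Hs s. chs_norm T s (\<lambda>t \<xi>. DF k g t \<xi> - DF (\<lambda>_. 0) g t \<xi> - D2 k g t \<xi>)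
        \<le> e / K * hs_norm s k * hs_norm s g)"
  proof -
    have "e / K > 0" using e K by simp
    then show ?thesis using D2_approx that by blast
  qed
  have D2_CHs: "k \<in> Hs s \<Longrightarrow> g \<in> Hs s \<Longrightarrow> D2 k g \<in> CHs T s" for k g
    using D2_bdd unfolding bdd_lin_op_def by blast
  show ?thesis
  proof (intro exI[of _ "min (r / (hs_norm s h + 1)) (\<delta>0 / (hs_norm s h + 1))"] conjI allI impI)
    show "min (r / (hs_norm s h + 1)) (\<delta>0 / (hs_norm s h + 1)) > 0"
      using r \<delta>0 by (simp add: add_nonneg_pos)
    fix x assume x: "\<bar>x\<bar> < min (r / (hs_norm s h + 1)) (\<delta>0 / (hs_norm s h + 1))"
    define k where "k = (\<lambda>\<zeta>. x *\<^sub>R h \<zeta>)"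
    have k: "k \<in> Hs s" "hs_norm s k = \<bar>x\<bar> * hs_norm s h" "hs_norm s k < r" "hs_norm s k < \<delta>0"
      using Hs_scaleR[OF h] hs_norm_scaled_direction x abs_mult_less_of_less_divide[of "hs_norm s h" x]
      by (auto simp: k_def)
    have "chs_norm T s (\<lambda>t \<xi>. DF k h t \<xi> - DF (\<lambda>_. 0) h t \<xi> - D2 k h t \<xi>)
        \<le> e / K * hs_norm s k * hs_norm s h"
      using approx k(1,4) h by blast
    then have "\<bar>hs_inner s (DF k h t) \<psi> - hs_inner s (DF (\<lambda>_. 0) h t) \<psi> - hs_inner s (D2 k h t) \<psi>\<bar>
        \<le> e / K * hs_norm s k * hs_norm s h * hs_norm s \<psi>"
      using r by (intro hs_inner_diff3_bound[OF DF_CHs[OF k(1,3) h] DF_CHs[OF Hs_zero _ h] D2_CHs[OF k(1) h] t \<psi>])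
         simp_all
    moreover have "chs_norm T s (\<lambda>t \<xi>. D2 (\<lambda>\<zeta>. x *\<^sub>R h \<zeta> + 0 *\<^sub>R h \<zeta>) h t \<xi>
        - (x *\<^sub>R D2 h h t \<xi> + 0 *\<^sub>R D2 h h t \<xi>)) = 0"
      using D2_lin h by blast
    then have "hs_inner s (D2 k h t) \<psi> = x * hs_inner s (D2 h h t) \<psi>"
      unfolding k_def
      by (rule hs_inner_scaleR_of_linear[where A = "\<lambda>k. D2 k h", OF D2_CHs[OF Hs_scaleR[OF h] h] D2_CHs[OF h h] t \<psi>])
    moreover have "e / K * hs_norm s k * hs_norm s h * hs_norm s \<psi> \<le> e * \<bar>x\<bar>"
    proof -
      have "e / K * hs_norm s k * hs_norm s h * hs_norm s \<psi> = e * \<bar>x\<bar> * ((hs_norm s h)\<^sup>2 * hs_norm s \<psi> / K)"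
        using k(2) by (simp add: field_simps power2_eq_square)
      also have "\<dots> \<le> e * \<bar>x\<bar> * 1" using e K by (intro mult_left_mono) (auto simp: K_def)
      finally show ?thesis by simp
    qed
    ultimately show "\<bar>hs_inner s (DF (\<lambda>\<zeta>. x *\<^sub>R h \<zeta>) h t) \<psi> - hs_inner s (DF (\<lambda>_. 0) h t) \<psi>
      - x * hs_inner s (D2 h h t) \<psi>\<bar> \<le> e * \<bar>x\<bar>"
      unfolding k_def by simp
  qed
qed

lemma pairing_taylor_expansion:
  assumes "e > 0"
  shows "\<exists>\<epsilon>0>0. \<forall>\<epsilon>. 0 < \<epsilon> \<and> \<epsilon> < \<epsilon>0 \<longrightarrow>
    \<bar>hs_inner s (F (\<lambda>\<zeta>. \<epsilon> *\<^sub>R h \<zeta>) t) \<psi> - hs_inner s (F (\<lambda>_. 0) t) \<psi>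
      - \<epsilon> * hs_inner s (DF (\<lambda>_. 0) h t) \<psi> - \<epsilon>\<^sup>2 * (hs_inner s (D2 h h t) \<psi> / 2)\<bar> \<le> e * \<epsilon>\<^sup>2"
proof -
  define \<rho> where "\<rho> = r / (hs_norm s h + 1)"
  have \<rho>: "\<rho> > 0" using r by (simp add: \<rho>_def add_nonneg_pos)
  have deriv: "((\<lambda>x. hs_inner s (F (\<lambda>\<zeta>. x *\<^sub>R h \<zeta>) t) \<psi>)
      has_real_derivative hs_inner s (DF (\<lambda>\<zeta>. x *\<^sub>R h \<zeta>) h t) \<psi>) (at x)" if "\<bar>x\<bar> < \<rho>" for x
    using that abs_mult_less_of_less_divide[of "hs_norm s h" x r] by (intro pairing_has_derivative) (simp add: \<rho>_def)
  from second_order_expansion_from_derivative[OF \<rho> deriv pairing_derivative_expansion assms]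
  show ?thesis by simp
qed

lemma second_order_coefficient_eq:
  assumes "hs_inner s (F (\<lambda>_. 0) t) \<psi> = 0"
    and "\<exists>\<epsilon>0>0. \<exists>C. \<forall>\<epsilon>. 0 < \<epsilon> \<and> \<epsilon> < \<epsilon>0 \<longrightarrow>
      \<bar>hs_inner s (F (\<lambda>\<zeta>. \<epsilon> *\<^sub>R h \<zeta>) t) \<psi> - \<epsilon> * c - \<epsilon>\<^sup>2 * d\<bar> \<le> C * \<epsilon> ^ 3"
  shows "hs_inner s (D2 h h t) \<psi> / 2 = d"
proof (rule expansion_coefficients_unique[OF _ assms(2)])
  fix e :: real assume "e > 0"
  from pairing_taylor_expansion[OF this] show "\<exists>\<epsilon>0>0. \<forall>\<epsilon>. 0 < \<epsilon> \<and> \<epsilon> < \<epsilon>0 \<longrightarrow>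
    \<bar>hs_inner s (F (\<lambda>\<zeta>. \<epsilon> *\<^sub>R h \<zeta>) t) \<psi> - \<epsilon> * hs_inner s (DF (\<lambda>_. 0) h t) \<psi>
      - \<epsilon>\<^sup>2 * (hs_inner s (D2 h h t) \<psi> / 2)\<bar> \<le> e * \<epsilon>\<^sup>2"
    using assms(1) by simp
qed

end

lemma smooth_solution_zero: "smooth_solution \<eta> T (\<lambda>\<zeta>. 0) (\<lambda>t \<xi>. 0)"
proof -
  have "nonlin (\<lambda>t \<xi>. 0) \<tau> \<xi> = 0" for \<tau> \<xi> unfolding nonlin_def by simp
  then show ?thesis
    unfolding smooth_solution_def mild_solution_def CHs_def by (simp add: Hs_zero set_integrable_def)
qed

lemma flow_map_zero:
  assumes "flow_map \<eta> s T F" "t \<in> {0..T}" "hs_finite s \<psi>"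
  shows "hs_inner s (F (\<lambda>_. 0) t) \<psi> = 0"
proof -
  obtain r where r: "r > 0" and F_CHs: "\<forall>\<phi>\<in>Hs s. hs_norm s \<phi> < r \<longrightarrow> F \<phi> \<in> CHs T s"
    and unique: "\<forall>\<phi>. (\<forall>\<sigma>. \<phi> \<in> Hs \<sigma>) \<and> hs_norm s \<phi> < r \<longrightarrow>
      (\<forall>w. smooth_solution \<eta> T \<phi> w \<longrightarrow> (\<forall>t\<in>{0..T}. hs_norm s (\<lambda>\<xi>. w t \<xi> - F \<phi> t \<xi>) = 0))"
    using assms(1) unfolding flow_map_def by blast
  from unique[rule_format, of "\<lambda>_. 0"] have "\<forall>w. smooth_solution \<eta> T (\<lambda>_. 0) w \<longrightarrow>
      (\<forall>t\<in>{0..T}. hs_norm s (\<lambda>\<xi>. w t \<xi> - F (\<lambda>_. 0) t \<xi>) = 0)"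
    using Hs_zero r by simp
  then have "hs_norm s (\<lambda>\<xi>. 0 - F (\<lambda>_. 0) t \<xi>) = 0"
    using smooth_solution_zero assms(2) by blast
  moreover have "F (\<lambda>_. 0) \<in> CHs T s" using F_CHs Hs_zero r by simp
  then have "hs_finite s (F (\<lambda>_. 0) t)" using assms(2) by (rule CHs_hs_finite)
  ultimately show ?thesis
    using hs_inner_norm_0[OF _ assms(3)] hs_finite_minus(2) by fastforce
qed

text \<open>On the side of the equation: by uniqueness, \<open>F (\<epsilon> h)\<close> is the smooth solution with data
  \<open>\<epsilon> h\<close>, whose Picard expansion is known up to \<open>O(\<epsilon>\<^sup>3)\<close> in \<open>L\<^sup>2 \<subseteq> H\<^sup>s\<close>.\<close>
lemma flow_pairing_expansion:
  assumes \<eta>: "\<eta> > 0" and s: "s \<le> 0" and T: "T > 0" and flow: "flow_map \<eta> s T F"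
    and h: "\<forall>\<sigma>. h \<in> Hs \<sigma>" "hs_norm 0 h > 0" and t: "t \<in> {0..T}" and \<psi>: "hs_finite s \<psi>"
  shows "\<exists>\<epsilon>0>0. \<exists>C. \<forall>\<epsilon>. 0 < \<epsilon> \<and> \<epsilon> < \<epsilon>0 \<longrightarrow>
    \<bar>hs_inner s (F (\<lambda>\<zeta>. \<epsilon> *\<^sub>R h \<zeta>) t) \<psi> - \<epsilon> * hs_inner s (free_evolution \<eta> h t) \<psi>
      - \<epsilon>\<^sup>2 * - hs_inner s (second_iterate \<eta> h t) \<psi>\<bar> \<le> C * \<epsilon> ^ 3"
proof -
  obtain r where r: "r > 0" and smooth: "\<forall>\<phi>. (\<forall>\<sigma>. \<phi> \<in> Hs \<sigma>) \<and> hs_norm s \<phi> < r \<longrightarrow> smooth_solution \<eta> T \<phi> (F \<phi>)"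
    using flow unfolding flow_map_def by blast
  define A where "A = exp (\<eta> * T / 4) * hs_norm 0 h"
  define K where "K = duhamel_const \<eta> T"
  have A: "A > 0" and K: "K \<ge> 0" using h(2) duhamel_const_nonneg by (auto simp: A_def K_def)
  have h0: "hs_finite 0 h" using h(1) Hs_imp_hs_finite by blast
  define \<epsilon>0 where "\<epsilon>0 = min (r / (hs_norm s h + 1)) (1 / (4 * K * A + 1))"
  have "\<epsilon>0 > 0" using r K A by (simp add: \<epsilon>0_def add_nonneg_pos)
  show ?thesis
  proof (rule exI[of _ \<epsilon>0], rule conjI[OF \<open>\<epsilon>0 > 0\<close>],
      rule exI[of _ "K * (K * (4 * A\<^sup>2) * (3 * A)) * hs_norm s \<psi>"], intro allI impI)
    fix \<epsilon> :: real assume \<epsilon>: "0 < \<epsilon> \<and> \<epsilon> < \<epsilon>0"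
    define u where "u = F (\<lambda>\<zeta>. \<epsilon> *\<^sub>R h \<zeta>)"
    have "hs_norm s (\<lambda>\<zeta>. \<epsilon> *\<^sub>R h \<zeta>) < r"
      using \<epsilon> abs_mult_less_of_less_divide[of "hs_norm s h" \<epsilon> r] hs_finite_scaleR(2)[OF Hs_imp_hs_finite] h(1)
      by (auto simp: \<epsilon>0_def)
    then have sol: "smooth_solution \<eta> T (\<lambda>\<zeta>. \<epsilon> *\<^sub>R h \<zeta>) u"
      using smooth h(1) Hs_scaleR unfolding u_def by blast
    then have u: "u \<in> CHs T 0" "u \<in> CHs T s" "mild_solution \<eta> T (\<lambda>\<xi>. \<epsilon> *\<^sub>R h \<xi>) u"
      unfolding smooth_solution_def by auto
    have small: "4 * K * (\<epsilon> * A) < 1"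
    proof -
      have "4 * K * A * \<epsilon> \<le> 4 * K * A * (1 / (4 * K * A + 1))"
        using \<epsilon> K A by (intro mult_left_mono) (auto simp: \<epsilon>0_def)
      also have "\<dots> < 1" using K A by (simp add: add_nonneg_pos)
      finally show ?thesis by (simp add: mult_ac)
    qed
    have a: "exp (\<eta> * T / 4) * (\<bar>\<epsilon>\<bar> * hs_norm 0 h) \<le> \<epsilon> * A" "\<epsilon> * A > 0"
      using \<epsilon> A by (auto simp: A_def)
    have "\<bar>hs_inner s (u t) \<psi> - \<epsilon> * hs_inner s (free_evolution \<eta> h t) \<psi>
        - \<epsilon>\<^sup>2 * - hs_inner s (second_iterate \<eta> h t) \<psi>\<bar>
        \<le> K * (K * (2 * (\<epsilon> * A))\<^sup>2 * (3 * (\<epsilon> * A))) * hs_norm s \<psi>"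
      using mild_solution_second_order_pairing[OF \<eta> less_imp_le[OF T] u(1) u(3) h0 a small[unfolded K_def]
          t s u(2) \<psi>] by (simp add: K_def)
    also have "\<dots> = K * (K * (4 * A\<^sup>2) * (3 * A)) * hs_norm s \<psi> * \<epsilon> ^ 3"
      by (simp add: power2_eq_square power3_eq_cube mult_ac)
    finally show "\<bar>hs_inner s (F (\<lambda>\<zeta>. \<epsilon> *\<^sub>R h \<zeta>) t) \<psi> - \<epsilon> * hs_inner s (free_evolution \<eta> h t) \<psi>
      - \<epsilon>\<^sup>2 * - hs_inner s (second_iterate \<eta> h t) \<psi>\<bar> \<le> K * (K * (4 * A\<^sup>2) * (3 * A)) * hs_norm s \<psi> * \<epsilon> ^ 3"
      unfolding u_def .
  qed
qed

lemma hs_norm_le_of_hs_inner_eq: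
  assumes "hs_finite s q" "hs_finite s w" "hs_inner s w q / 2 = - hs_inner s q q"
  shows "hs_norm s q \<le> hs_norm s w / 2"
proof -
  have le: "hs_norm s q * hs_norm s q \<le> hs_norm s w / 2 * hs_norm s q"
    using assms hs_inner_self[of s q] hs_inner_abs_le[OF assms(2,1)] by (simp add: power2_eq_square abs_le_iff)
  show ?thesis
  proof (cases "hs_norm s q = 0")
    case False
    then have "hs_norm s q > 0" using hs_norm_nonneg[of s q] by linarith
    with le show ?thesis by (rule mult_right_le_imp_le)
  qed simp
qed

text \<open>Comparing the two expansions of \<open>\<epsilon> \<mapsto> hs_inner s (F (\<epsilon> h) t) \<psi>\<close> identifies the second
  derivative of the flow with the quadratic Picard term, \<open>D\<^sup>2F(0)[h, h] = -2 A\<^sub>2\<close>; so boundedness of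
  \<open>D\<^sup>2F(0)\<close> bounds \<open>A\<^sub>2\<close> in \<open>H\<^sup>s\<close> by \<open>\<parallel>h\<parallel>\<^sub>s\<^sup>2\<close>.\<close>
lemma second_iterate_hs_bound:
  assumes \<eta>: "\<eta> > 0" and s: "s \<le> 0" and T: "T > 0"
    and flow: "flow_map \<eta> s T F" and C2: "twice_frechet_at_zero s T F"
  obtains C where "\<And>h t. (\<forall>\<sigma>. h \<in> Hs \<sigma>) \<Longrightarrow> hs_norm 0 h > 0 \<Longrightarrow> t \<in> {0..T} \<Longrightarrow>
    hs_norm s (second_iterate \<eta> h t) \<le> C * (hs_norm s h)\<^sup>2"
proof -
  obtain r1 where r1: "r1 > 0" and F_CHs: "\<forall>\<phi>\<in>Hs s. hs_norm s \<phi> < r1 \<longrightarrow> F \<phi> \<in> CHs T s"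
    using flow unfolding flow_map_def by blast
  obtain r2 DF D2 where r2: "r2 > 0"
    and DF: "\<forall>\<phi>\<in>Hs s. hs_norm s \<phi> < r2 \<longrightarrow> frechet_deriv_at s T F \<phi> (DF \<phi>)"
    and D2_bdd: "\<forall>h\<in>Hs s. bdd_lin_op s T (D2 h)"
    and D2_lin: "\<forall>h\<in>Hs s. \<forall>h'\<in>Hs s. \<forall>g\<in>Hs s. \<forall>a b :: real.
           chs_norm T s (\<lambda>t \<xi>. D2 (\<lambda>\<zeta>. a *\<^sub>R h \<zeta> + b *\<^sub>R h' \<zeta>) g t \<xi>
                                 - (a *\<^sub>R D2 h g t \<xi> + b *\<^sub>R D2 h' g t \<xi>)) = 0"
    and D2_norm: "\<exists>C. \<forall>h\<in>Hs s. \<forall>g\<in>Hs s. chs_norm T s (D2 h g) \<le> C * hs_norm s h * hs_norm s g"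
    and D2_approx: "\<forall>\<epsilon>>0. \<exists>\<delta>>0. \<forall>h\<in>Hs s. hs_norm s h < \<delta> \<longrightarrow>
           (\<forall>g\<in>Hs s. chs_norm T s (\<lambda>t \<xi>. DF h g t \<xi> - DF (\<lambda>_. 0) g t \<xi> - D2 h g t \<xi>)
                        \<le> \<epsilon> * hs_norm s h * hs_norm s g)"
    using C2 unfolding twice_frechet_at_zero_def by blast
  obtain C where C: "\<forall>h\<in>Hs s. \<forall>g\<in>Hs s. chs_norm T s (D2 h g) \<le> C * hs_norm s h * hs_norm s g"
    using D2_norm by blast
  have r: "min r1 r2 > 0" using r1 r2 by simp
  have F_CHs': "F \<phi> \<in> CHs T s" and DF': "frechet_deriv_at s T F \<phi> (DF \<phi>)"
    if "\<phi> \<in> Hs s" "hs_norm s \<phi> < min r1 r2" for \<phi>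
    using F_CHs DF that by auto
  have D2_bdd': "bdd_lin_op s T (D2 k)" if "k \<in> Hs s" for k using D2_bdd that by blast
  show ?thesis
  proof (rule that[of "max C 0 / 2"])
    fix h t assume h: "\<forall>\<sigma>. h \<in> Hs \<sigma>" "hs_norm 0 h > 0" and t: "t \<in> {0..T}"
    define Q where "Q = second_iterate \<eta> h t"
    have hs: "h \<in> Hs s" using h(1) by blast
    have Q: "hs_finite s Q"
      using hs_finite_second_iterate[OF \<eta> _ Hs_imp_hs_finite] h(1) t hs_finite_weaker(1)[OF _ s]
      by (auto simp: Q_def)
    have "hs_inner s (D2 h h t) Q / 2 = - hs_inner s Q Q"
      by (rule second_order_coefficient_eq[OF r F_CHs' DF' D2_bdd' D2_lin D2_approx hs t Q
          flow_map_zero[OF flow t Q] flow_pairing_expansion[OF \<eta> s T flow h t Q, folded Q_def]])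
    moreover have "hs_finite s (D2 h h t)" "D2 h h \<in> CHs T s"
      using D2_bdd hs t unfolding bdd_lin_op_def by (blast intro: CHs_hs_finite)+
    ultimately have "hs_norm s Q \<le> hs_norm s (D2 h h t) / 2"
      using Q by (intro hs_norm_le_of_hs_inner_eq) auto
    also have "\<dots> \<le> chs_norm T s (D2 h h) / 2"
      using hs_norm_le_chs_norm_CHs[OF \<open>D2 h h \<in> CHs T s\<close> t] by simp
    also have "\<dots> \<le> max C 0 / 2 * (hs_norm s h)\<^sup>2"
    proof -
      have "chs_norm T s (D2 h h) \<le> C * hs_norm s h * hs_norm s h" using C hs by blast
      also have "\<dots> \<le> max C 0 * (hs_norm s h)\<^sup>2" by (simp add: power2_eq_square mult_right_mono mult.assoc)
      finally show ?thesis by simp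
    qed
    finally show "hs_norm s (second_iterate \<eta> h t) \<le> max C 0 / 2 * (hs_norm s h)\<^sup>2"
      unfolding Q_def .
  qed
qed

section \<open>The high-frequency counterexample\<close>

definition freq_annulus :: "real \<Rightarrow> real set" where
  "freq_annulus N = {\<xi>. N \<le> \<bar>\<xi>\<bar> \<and> \<bar>\<xi>\<bar> \<le> 2 * N}"

definition bump :: "real \<Rightarrow> real \<Rightarrow> complex" where
  "bump N \<xi> = complex_of_real (indicator (freq_annulus N) \<xi>)"

lemma freq_annulus_measurable [measurable]: "freq_annulus N \<in> sets lborel"
  unfolding freq_annulus_def by measurable

lemma compact_freq_annulus: "compact (freq_annulus N)"
proof -
  have "closed (freq_annulus N)" unfolding freq_annulus_def
    by (intro closed_Collect_conj closed_Collect_le continuous_intros)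
  moreover have "bounded (freq_annulus N)" unfolding freq_annulus_def bounded_iff by (intro exI[of _ "2 * N"]) auto
  ultimately show ?thesis by (simp add: compact_eq_bounded_closed)
qed

lemma bump_measurable [measurable]: "bump N \<in> borel_measurable lborel"
  unfolding bump_def by measurable

lemma bump_Hs: "bump N \<in> Hs \<sigma>"
proof -
  have e: "(\<lambda>\<xi>. (1 + \<xi>\<^sup>2) powr \<sigma> * (cmod (bump N \<xi>))\<^sup>2) = (\<lambda>\<xi>. indicator (freq_annulus N) \<xi> *\<^sub>R (1 + \<xi>\<^sup>2) powr \<sigma>)"
    unfolding bump_def by (auto simp: indicator_def)
  have i: "integrable lborel (\<lambda>\<xi>. indicator (freq_annulus N) \<xi> *\<^sub>R (1 + \<xi>\<^sup>2) powr \<sigma>)"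
  proof (rule borel_integrable_compact[OF compact_freq_annulus])
    show "continuous_on (freq_annulus N) (\<lambda>\<xi>::real. (1 + \<xi>\<^sup>2) powr \<sigma>)"
    proof (intro continuous_intros ballI)
      fix \<xi> :: real have "0 \<le> \<xi>\<^sup>2" by simp
      then show "1 + \<xi>\<^sup>2 \<noteq> 0" by linarith
    qed
  qed
  have i2: "integrable lborel (\<lambda>\<xi>. (1 + \<xi>\<^sup>2) powr \<sigma> * (cmod (bump N \<xi>))\<^sup>2)" unfolding e by (rule i)
  have "AE \<xi> in lborel. bump N (- \<xi>) = cnj (bump N \<xi>)"
    by (intro AE_I2) (simp add: bump_def freq_annulus_def indicator_def)
  then show ?thesis unfolding Hs_def using i2 by simp
qed

lemma integral_indicator_const: "a \<le> b \<Longrightarrow> (LINT x|lborel. indicator {a..b} x * (c::real)) = (b - a) * c"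
  by (simp add: mult.commute)

lemma integrable_indicator_const: "integrable lborel (\<lambda>x. indicator {a..b::real} x * (c::real))"
  using borel_integrable_atLeastAtMost'[of a b "\<lambda>_. c"] unfolding set_integrable_def
  by (simp add: mult.commute)

lemma hs_norm_bump_pos:
  assumes N: "N > 0" shows "hs_norm 0 (bump N) > 0"
proof -
  have i: "integrable lborel (\<lambda>\<xi>. (cmod (bump N \<xi>))\<^sup>2)"
    using Hs_imp_hs_finite[OF bump_Hs[of N 0]] unfolding hs_finite_def by simp
  have "(LINT \<xi>|lborel. indicator {N..2*N} \<xi> * 1) \<le> (LINT \<xi>|lborel. (cmod (bump N \<xi>))\<^sup>2)"
    by (intro integral_mono integrable_indicator_const i) (auto simp: bump_def freq_annulus_def indicator_def)
  then have "N \<le> (hs_norm 0 (bump N))\<^sup>2" unfolding hs_norm_squared using N by simp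
  then show ?thesis using N hs_norm_nonneg[of 0 "bump N"] by (auto simp: order_le_less power2_eq_square)
qed

lemma hs_norm_bump_le:
  assumes N: "N > 0" and s: "s \<le> 0"
  shows "(hs_norm s (bump N))\<^sup>2 \<le> 2 * N * (1 + N\<^sup>2) powr s"
proof -
  have i: "integrable lborel (\<lambda>\<xi>. hs_weight s \<xi> * (cmod (bump N \<xi>))\<^sup>2)"
    using Hs_imp_hs_finite[OF bump_Hs] unfolding hs_finite_def by simp
  have pt: "hs_weight s \<xi> * (cmod (bump N \<xi>))\<^sup>2 \<le> indicator {-2*N..-N} \<xi> * (1 + N\<^sup>2) powr s + indicator {N..2*N} \<xi> * (1 + N\<^sup>2) powr s" for \<xi>
  proof (cases "N \<le> \<bar>\<xi>\<bar> \<and> \<bar>\<xi>\<bar> \<le> 2 * N")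
    case True
    have "hs_weight s \<xi> \<le> (1 + N\<^sup>2) powr s" unfolding hs_weight_def
    proof (rule powr_mono2'[OF s])
      show "0 < 1 + N\<^sup>2" by (simp add: add_pos_nonneg)
      have "N\<^sup>2 \<le> \<xi>\<^sup>2" using True N by (metis abs_le_square_iff abs_of_pos)
      then show "1 + N\<^sup>2 \<le> 1 + \<xi>\<^sup>2" by simp
    qed
    have c1: "cmod (bump N \<xi>) = 1" using True by (simp add: bump_def freq_annulus_def indicator_def)
    have c2: "indicator {-2*N..-N} \<xi> + indicator {N..2*N} \<xi> = (1::real)"
      using True N by (cases "\<xi> \<ge> 0") (auto simp: indicator_def)
    have "hs_weight s \<xi> * (cmod (bump N \<xi>))\<^sup>2 \<le> (indicator {-2*N..-N} \<xi> + indicator {N..2*N} \<xi>) * (1 + N\<^sup>2) powr s"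
      unfolding c1 c2 using \<open>hs_weight s \<xi> \<le> (1 + N\<^sup>2) powr s\<close> by simp
    then show ?thesis by (simp add: distrib_right)
  next
    case False
    then have "bump N \<xi> = 0" by (simp add: bump_def freq_annulus_def indicator_def)
    moreover have "0 \<le> indicator {-2*N..-N} \<xi> * (1 + N\<^sup>2) powr s + indicator {N..2*N} \<xi> * (1 + N\<^sup>2) powr (s::real)"
      by (intro add_nonneg_nonneg mult_nonneg_nonneg) auto
    ultimately show ?thesis by simp
  qed
  have "(hs_norm s (bump N))\<^sup>2 \<le> (LINT \<xi>|lborel. indicator {-2*N..-N} \<xi> * (1 + N\<^sup>2) powr s + indicator {N..2*N} \<xi> * (1 + N\<^sup>2) powr s)"
    unfolding hs_norm_squared by (intro integral_mono i pt Bochner_Integration.integrable_add integrable_indicator_const)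
  also have "\<dots> = N * (1 + N\<^sup>2) powr s + N * (1 + N\<^sup>2) powr s"
    using N by (simp add: Bochner_Integration.integral_add[OF integrable_indicator_const integrable_indicator_const] mult.commute)
  finally show ?thesis by simp
qed

lemma exp_symbol_ge:
  fixes \<eta> N \<tau> x :: real
  assumes eta: "\<eta> > 0" and \<tau>: "\<tau> \<ge> 0" and x: "\<bar>x\<bar> \<le> 2 * N"
  shows "exp (- \<eta> * (x\<^sup>2 - \<bar>x\<bar>) * \<tau>) \<ge> exp (- 4 * \<eta> * N\<^sup>2 * \<tau>)"
proof -
  have "x\<^sup>2 \<le> (2 * N)\<^sup>2" using x by (metis abs_le_square_iff abs_of_nonneg abs_ge_zero order.trans)
  then have "x\<^sup>2 - \<bar>x\<bar> \<le> 4 * N\<^sup>2" by (simp add: power_mult_distrib)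
  then have "\<eta> * \<tau> * (x\<^sup>2 - \<bar>x\<bar>) \<le> \<eta> * \<tau> * (4 * N\<^sup>2)" using eta \<tau> by (intro mult_left_mono) auto
  then show ?thesis by (simp add: algebra_simps)
qed

lemma convolution_bump_ge:
  fixes \<eta> N \<tau> \<xi> :: real
  assumes eta: "\<eta> > 0" and N: "N > 0" and \<tau>: "\<tau> \<ge> 0" and \<xi>: "\<xi> \<in> {N/4..N/2}"
  shows "Re (LINT \<zeta>|lborel. free_evolution \<eta> (bump N) \<tau> (\<xi> - \<zeta>) * free_evolution \<eta> (bump N) \<tau> \<zeta>) \<ge> N / 2 * exp (- 8 * \<eta> * N\<^sup>2 * \<tau>)"
proof -
  define e where "e = (\<lambda>x. exp (- \<eta> * (x\<^sup>2 - \<bar>x\<bar>) * \<tau>) * indicator (freq_annulus N) x)"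
  have V: "free_evolution \<eta> (bump N) \<tau> x = complex_of_real (e x)" for x
    unfolding free_evolution_def S0sym_def e_def bump_def by (simp add: algebra_simps)
  have hW: "hs_finite 0 (bump N)" using bump_Hs Hs_imp_hs_finite by blast
  have VW: "hs_finite 0 (free_evolution \<eta> (bump N) \<tau>)" using hs_finite_S0sym_mult(1)[OF eta \<tau> order_refl hW] unfolding free_evolution_def by simp
  have ic: "integrable lborel (\<lambda>\<zeta>. free_evolution \<eta> (bump N) \<tau> (\<xi> - \<zeta>) * free_evolution \<eta> (bump N) \<tau> \<zeta>)" by (rule convolution_bound(1)[OF VW VW])
  have i: "integrable lborel (\<lambda>\<zeta>. e (\<xi> - \<zeta>) * e \<zeta>)"
    using ic unfolding V by (simp flip: of_real_mult add: complex_of_real_integrable_eq)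
  have "Re (LINT \<zeta>|lborel. free_evolution \<eta> (bump N) \<tau> (\<xi> - \<zeta>) * free_evolution \<eta> (bump N) \<tau> \<zeta>) = (LINT \<zeta>|lborel. e (\<xi> - \<zeta>) * e \<zeta>)"
    unfolding V by (simp flip: of_real_mult)
  also have "\<dots> \<ge> (LINT \<zeta>|lborel. indicator {-3*N/2..-N} \<zeta> * exp (- 8 * \<eta> * N\<^sup>2 * \<tau>))"
  proof (rule integral_mono[OF integrable_indicator_const i])
    fix \<zeta> :: real
    show "indicator {-3*N/2..-N} \<zeta> * exp (- 8 * \<eta> * N\<^sup>2 * \<tau>) \<le> e (\<xi> - \<zeta>) * e \<zeta>"
    proof (cases "\<zeta> \<in> {-3*N/2..-N}")
      case True
      have z1: "\<zeta> \<in> freq_annulus N" and z2: "\<xi> - \<zeta> \<in> freq_annulus N" using True \<xi> N unfolding freq_annulus_def by auto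
      have a1: "e \<zeta> \<ge> exp (- 4 * \<eta> * N\<^sup>2 * \<tau>)" unfolding e_def using z1 exp_symbol_ge[OF eta \<tau>, of \<zeta> N] unfolding freq_annulus_def by auto
      have a2: "e (\<xi> - \<zeta>) \<ge> exp (- 4 * \<eta> * N\<^sup>2 * \<tau>)" unfolding e_def using z2 exp_symbol_ge[OF eta \<tau>, of "\<xi> - \<zeta>" N] unfolding freq_annulus_def by auto
      have a3: "0 \<le> e (\<xi> - \<zeta>)" using a2 by (meson exp_ge_zero order_trans)
      have "exp (- 8 * \<eta> * N\<^sup>2 * \<tau>) = exp (- 4 * \<eta> * N\<^sup>2 * \<tau>) * exp (- 4 * \<eta> * N\<^sup>2 * \<tau>)"
        by (simp flip: exp_add)
      also have "\<dots> \<le> e (\<xi> - \<zeta>) * e \<zeta>" using a1 a2 a3 by (intro mult_mono) auto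
      finally show ?thesis using True by simp
    next
      case False
      have "0 \<le> e (\<xi> - \<zeta>) * e \<zeta>" unfolding e_def by simp
      then show ?thesis using False by simp
    qed
  qed
  also have "(LINT \<zeta>|lborel. indicator {-3*N/2..-N} \<zeta> * exp (- 8 * \<eta> * N\<^sup>2 * \<tau>)) = N / 2 * exp (- 8 * \<eta> * N\<^sup>2 * \<tau>)"
    using N by (subst integral_indicator_const) auto
  finally show ?thesis .
qed

lemma Im_nonlin_factor: "Im (complex_of_real a * (\<i> * complex_of_real x / complex_of_real b * c)) = a * (x / b) * Re c"
  by (cases "b = 0") (simp_all add: Im_divide power2_eq_square field_simps)

lemma S0sym_low_freq_ge:
  fixes \<eta> N \<xi> r :: real
  assumes "\<eta> > 0" "N > 0" "\<xi> \<in> {N/4..N/2}" "0 \<le> r" "r \<le> 1 / N\<^sup>2"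
  shows "exp (- \<eta> * (\<xi>\<^sup>2 - \<bar>\<xi>\<bar>) * r) \<ge> exp (- \<eta>)"
proof -
  have "(\<xi>\<^sup>2 - \<bar>\<xi>\<bar>) * r \<le> \<xi>\<^sup>2 * r" using assms by (intro mult_right_mono) auto
  also have "\<dots> \<le> \<xi>\<^sup>2 * (1 / N\<^sup>2)" using assms by (intro mult_left_mono) auto
  also have "\<dots> \<le> (N / 2)\<^sup>2 * (1 / N\<^sup>2)" using assms by (intro mult_right_mono power_mono) auto
  also have "\<dots> \<le> 1" using assms by (simp add: power_divide)
  finally have "\<eta> * ((\<xi>\<^sup>2 - \<bar>\<xi>\<bar>) * r) \<le> \<eta>" using assms(1) by (simp add: mult_le_cancel_left1)
  then show ?thesis by (simp add: mult.assoc)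
qed

text \<open>The high--high to low frequency interaction: on \<open>[N/4, N/2]\<close> the quadratic term at time
  \<open>t = 1/N\<^sup>2\<close> is bounded below uniformly in \<open>N\<close>, since the integrand has imaginary part
  \<open>\<gtrsim> \<xi> N\<close> on the whole interval \<open>[0, t]\<close>.\<close>
lemma norm_second_iterate_bump_ge:
  assumes \<eta>: "\<eta> > 0" and N: "N \<ge> 1" and \<xi>: "\<xi> \<in> {N/4..N/2}"
  shows "cmod (second_iterate \<eta> (bump N) (1 / N\<^sup>2) \<xi>) \<ge> exp (- 9 * \<eta>) / (32 * pi)"
proof -
  define t where "t = 1 / N\<^sup>2"
  have Npos: "N > 0" and t0: "t > 0" and Nt: "N\<^sup>2 * t = 1" using N by (auto simp: t_def)
  define f where "f \<tau> = indicator {0..t} \<tau> *\<^sub>R (S0sym \<eta> (t - \<tau>) \<xi> * nonlin (free_evolution \<eta> (bump N)) \<tau> \<xi>)" for \<tau>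
  have fi: "integrable lborel f"
    using set_integrable_second_iterate[OF \<eta> _ Hs_imp_hs_finite[OF bump_Hs], of t \<xi>] t0
    unfolding set_integrable_def f_def by simp
  define c1 where "c1 = exp (- 9 * \<eta>) * N\<^sup>2 / (32 * pi)"
  have "indicator {0..t} \<tau> * c1 \<le> Im (f \<tau>)" for \<tau>
  proof (cases "\<tau> \<in> {0..t}")
    case False then show ?thesis unfolding f_def by simp
  next
    case True
    define sv where "sv = exp (- \<eta> * (\<xi>\<^sup>2 - \<bar>\<xi>\<bar>) * (t - \<tau>))"
    define cv where "cv = (LINT \<zeta>|lborel. free_evolution \<eta> (bump N) \<tau> (\<xi> - \<zeta>) * free_evolution \<eta> (bump N) \<tau> \<zeta>)"
    have fe: "Im (f \<tau>) = sv * (\<xi> / (4 * pi)) * Re cv"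
      unfolding f_def using True
      by (simp add: S0sym_def nonlin_def sv_def cv_def Im_nonlin_factor del: of_real_mult)
    have sv: "sv \<ge> exp (- \<eta>)"
      unfolding sv_def using True t_def by (intro S0sym_low_freq_ge[OF \<eta> Npos \<xi>]) auto
    have "exp (- 8 * \<eta> * N\<^sup>2 * \<tau>) \<ge> exp (- 8 * \<eta>)"
      using True Nt \<eta> mult_left_mono[of \<tau> t "N\<^sup>2"] by (simp add: mult.assoc)
    then have cv: "Re cv \<ge> N / 2 * exp (- 8 * \<eta>)"
      using convolution_bump_ge[OF \<eta> Npos _ \<xi>, of \<tau>] True Npos unfolding cv_def
      by (smt (verit) mult_left_mono divide_nonneg_pos atLeastAtMost_iff)
    have "c1 = exp (- \<eta>) * (N / (16 * pi)) * (N / 2 * exp (- 8 * \<eta>))"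
      unfolding c1_def by (simp add: power2_eq_square field_simps flip: exp_add)
    also have "\<dots> \<le> sv * (\<xi> / (4 * pi)) * Re cv"
    proof (rule mult_mono)
      show "exp (- \<eta>) * (N / (16 * pi)) \<le> sv * (\<xi> / (4 * pi))"
        using sv \<xi> Npos by (intro mult_mono) (auto simp: field_simps sv_def)
      show "0 \<le> sv * (\<xi> / (4 * pi))" using \<xi> Npos by (simp add: sv_def)
    qed (use cv Npos in auto)
    finally show ?thesis unfolding fe using True by simp
  qed
  then have "(LINT \<tau>|lborel. indicator {0..t} \<tau> * c1) \<le> (LINT \<tau>|lborel. Im (f \<tau>))"
    by (intro integral_mono integrable_indicator_const integrable_Im fi)
  also have "\<dots> = Im (second_iterate \<eta> (bump N) t \<xi>)"
  proof -
    have "second_iterate \<eta> (bump N) t \<xi> = (LINT \<tau>|lborel. f \<tau>)"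
      unfolding second_iterate_def f_def set_lebesgue_integral_def by simp
    then show ?thesis using fi by simp
  qed
  also have "\<dots> \<le> cmod (second_iterate \<eta> (bump N) t \<xi>)" by (rule order_trans[OF abs_ge_self abs_Im_le_cmod])
  finally show ?thesis using t0 Npos by (simp add: c1_def t_def)
qed

lemma hs_norm_second_iterate_bump_ge:
  assumes \<eta>: "\<eta> > 0" and N: "N \<ge> 1" and s: "s \<le> 0"
  shows "N / 4 * (1 + N\<^sup>2) powr s * (exp (- 9 * \<eta>) / (32 * pi))\<^sup>2
    \<le> (hs_norm s (second_iterate \<eta> (bump N) (1 / N\<^sup>2)))\<^sup>2"
proof -
  define Q where "Q = second_iterate \<eta> (bump N) (1 / N\<^sup>2)"
  define c0 where "c0 = exp (- 9 * \<eta>) / (32 * pi)"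
  have i: "integrable lborel (\<lambda>\<xi>. hs_weight s \<xi> * (cmod (Q \<xi>))\<^sup>2)"
    using hs_finite_weaker(1)[OF hs_finite_second_iterate[OF \<eta> _ Hs_imp_hs_finite[OF bump_Hs]] s]
    unfolding Q_def hs_finite_def by simp
  have "indicator {N/4..N/2} \<xi> * ((1 + N\<^sup>2) powr s * c0\<^sup>2) \<le> hs_weight s \<xi> * (cmod (Q \<xi>))\<^sup>2" for \<xi>
  proof (cases "\<xi> \<in> {N/4..N/2}")
    case True
    have "(1 + N\<^sup>2) powr s \<le> hs_weight s \<xi>" unfolding hs_weight_def
      using True N by (intro powr_mono2'[OF s]) (auto intro!: add_pos_nonneg power_mono)
    moreover have "c0\<^sup>2 \<le> (cmod (Q \<xi>))\<^sup>2"
      using norm_second_iterate_bump_ge[OF \<eta> N True] by (intro power_mono) (auto simp: Q_def c0_def)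
    ultimately show ?thesis using True by (simp add: mult_mono)
  qed simp
  then have "(LINT \<xi>|lborel. indicator {N/4..N/2} \<xi> * ((1 + N\<^sup>2) powr s * c0\<^sup>2)) \<le> (hs_norm s Q)\<^sup>2"
    unfolding hs_norm_squared by (intro integral_mono integrable_indicator_const i)
  then show ?thesis using N by (simp add: integral_indicator_const Q_def c0_def field_simps)
qed

lemma mult_powr_le:
  fixes N s :: real
  assumes "N > 0" "s \<le> 0"
  shows "N * (1 + N\<^sup>2) powr s \<le> N powr (1 + 2 * s)"
proof -
  have "(1 + N\<^sup>2) powr s \<le> (N\<^sup>2) powr s" using assms by (intro powr_mono2') auto
  also have "(N\<^sup>2) powr s = N powr (2 * s)" using assms by (simp add: powr_powr flip: powr_numeral)
  finally have "N * (1 + N\<^sup>2) powr s \<le> N * N powr (2 * s)" using assms by simp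
  also have "\<dots> = N powr (1 + 2 * s)" using assms by (simp add: powr_add)
  finally show ?thesis .
qed

lemma second_iterate_bump_bound_imp:
  assumes \<eta>: "\<eta> > 0" and s: "s \<le> 0" and N: "N \<ge> 1"
    and C: "hs_norm s (second_iterate \<eta> (bump N) (1 / N\<^sup>2)) \<le> C * (hs_norm s (bump N))\<^sup>2"
  shows "(exp (- 9 * \<eta>) / (32 * pi))\<^sup>2 \<le> 16 * C\<^sup>2 * N powr (1 + 2 * s)"
proof -
  define c0 where "c0 = exp (- 9 * \<eta>) / (32 * pi)"
  define p where "p = (1 + N\<^sup>2) powr s"
  have Npos: "N > 0" using N by simp
  have "1 + N\<^sup>2 > 0" by (simp add: add_pos_nonneg)
  then have p: "p > 0" by (simp add: p_def)
  have "N / 4 * p * c0\<^sup>2 \<le> (C * (hs_norm s (bump N))\<^sup>2)\<^sup>2"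
    using hs_norm_second_iterate_bump_ge[OF \<eta> N s] C unfolding p_def c0_def
    by (smt (verit) hs_norm_nonneg power_mono)
  also have "\<dots> = C\<^sup>2 * ((hs_norm s (bump N))\<^sup>2)\<^sup>2" by (simp add: power_mult_distrib)
  also have "\<dots> \<le> C\<^sup>2 * (2 * N * p)\<^sup>2"
    using hs_norm_bump_le[OF Npos s] by (intro mult_left_mono power_mono) (auto simp: p_def)
  finally have "(N * p / 4) * c0\<^sup>2 \<le> (N * p / 4) * (16 * C\<^sup>2 * (N * p))"
    by (simp add: power2_eq_square algebra_simps)
  then have "c0\<^sup>2 \<le> 16 * C\<^sup>2 * (N * p)" using Npos p by (simp add: mult_le_cancel_left_pos mult_ac)
  also have "\<dots> \<le> 16 * C\<^sup>2 * N powr (1 + 2 * s)"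
    using mult_powr_le[OF Npos s] by (intro mult_left_mono) (auto simp: p_def)
  finally show ?thesis unfolding c0_def .
qed

theorem theorem1p4:
  fixes \<eta> s :: real
  assumes "\<eta> > 0" and "s < - 1 / 2"
  shows "\<not> (\<exists>T>0. \<exists>F. flow_map \<eta> s T F \<and> twice_frechet_at_zero s T F)"
proof
  assume "\<exists>T>0. \<exists>F. flow_map \<eta> s T F \<and> twice_frechet_at_zero s T F"
  then obtain T F where T: "T > 0" and flow: "flow_map \<eta> s T F" and C2: "twice_frechet_at_zero s T F"
    by blast
  have s: "s \<le> 0" using assms(2) by simp
  obtain C where C: "\<And>h t. (\<forall>\<sigma>. h \<in> Hs \<sigma>) \<Longrightarrow> hs_norm 0 h > 0 \<Longrightarrow> t \<in> {0..T} \<Longrightarrow>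
      hs_norm s (second_iterate \<eta> h t) \<le> C * (hs_norm s h)\<^sup>2"
    using second_iterate_hs_bound[OF assms(1) s T flow C2] by blast
  define c0 where "c0 = (exp (- 9 * \<eta>) / (32 * pi))\<^sup>2"
  have "((\<lambda>N::real. 16 * C\<^sup>2 * N powr (1 + 2 * s)) \<longlongrightarrow> 16 * C\<^sup>2 * 0) at_top"
    using assms(2) by (intro tendsto_mult_left tendsto_neg_powr filterlim_ident) auto
  then have "eventually (\<lambda>N. 16 * C\<^sup>2 * N powr (1 + 2 * s) < c0) at_top"
    by (rule order_tendstoD) (simp add: c0_def)
  then obtain N where small: "16 * C\<^sup>2 * N powr (1 + 2 * s) < c0" and N: "max 1 (1 / T) \<le> N"
    using eventually_ge_at_top[of "max 1 (1 / T)"] unfolding eventually_at_top_linorder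
    by (metis max.idem max.cobounded1 max.cobounded2)
  have "1 / T \<le> N * N" using N by (smt (verit) max.bounded_iff mult_le_cancel_left1)
  then have "1 / N\<^sup>2 \<in> {0..T}" using T N by (auto simp: power2_eq_square field_simps)
  then have "c0 \<le> 16 * C\<^sup>2 * N powr (1 + 2 * s)"
    using N C[OF allI[OF bump_Hs] hs_norm_bump_pos] unfolding c0_def
    by (intro second_iterate_bump_bound_imp[OF assms(1) s]) auto
  with small show False by simp
qed

end
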